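(* For all integers $m,n\ge 1$, the independence polynomial $I_{T^*_{3,m,n}}(t)$ of the tree $T^*_{3,m,n}$ is unimodal.
   Context: For a finite simple graph $G$, let $i_k$ be the number of independent sets of $G$ of size $k$ ($i_0=1$), and $I_G(t)=\sum_{k\ge 0} i_k t^k$ its independence polynomial. A polynomial is unimodal if its coefficient sequence $a_0,\dots,a_N$ satisfies $a_0\le\cdots\le a_j\ge a_{j+1}\ge\cdots\ge a_N$ for some $j$. The tree $T_{3,m,n}$ has a root $v_0$ with three children $v_1,v_2,v_3$; $v_1$ has children $v_{11},v_{12},v_{13}$, $v_2$ has children $v_{21},\dots,v_{2m}$, $v_3$ has children $v_{31},\dots,v_{3n}$, and each $v_{ij}$ has exactly one child $v'_{ij}$ (a leaf). The tree $T^*_{3,m,n}$ is obtained from $T_{3,m,n}$ by adding two new vertices $x,y$ and edges $v'_{13}x$ and $xy$ (i.e. the edge $v_{13}v'_{13}$ is replaced by a path $v_{13}v'_{13}xy$ on four vertices). *)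

theory Defs
  imports "HOL-Computational_Algebra.Polynomial"
begin

definition simple_graph :: "'a set \<Rightarrow> 'a set set \<Rightarrow> bool" where
  "simple_graph V E \<longleftrightarrow> finite V \<and> (\<forall>e\<in>E. e \<subseteq> V \<and> card e = 2)"

definition independent_set :: "'a set \<Rightarrow> 'a set set \<Rightarrow> 'a set \<Rightarrow> bool" where
  "independent_set V E S \<longleftrightarrow> S \<subseteq> V \<and> (\<forall>e\<in>E. \<not> e \<subseteq> S)"

definition indep_poly :: "'a set \<Rightarrow> 'a set set \<Rightarrow> nat poly" where
  "indep_poly V E = (\<Sum>S\<in>{S. independent_set V E S}. monom 1 (card S))"

definition unimodal :: "nat poly \<Rightarrow> bool" where
  "unimodal p \<longleftrightarrow> (\<exists>j. (\<forall>i<j. coeff p i \<le> coeff p (Suc i)) \<and>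
                       (\<forall>i. j \<le> i \<and> i < degree p \<longrightarrow> coeff p (Suc i) \<le> coeff p i))"

text \<open>Vertices of the trees: root v0, Mid i = v_i, Ch i j = v_ij, Lf i j = v'_ij,
and the extra vertices x, y of T*.\<close>

datatype tvert = Root | Mid nat | Ch nat nat | Lf nat nat | VX | VY

definition child_idx :: "nat \<Rightarrow> nat \<Rightarrow> (nat \<times> nat) set" where
  "child_idx m n = {(1, j) | j. j \<in> {1..3}} \<union> {(2, j) | j. j \<in> {1..m}} \<union> {(3, j) | j. j \<in> {1..n}}"

definition T3_verts :: "nat \<Rightarrow> nat \<Rightarrow> tvert set" where
  "T3_verts m n = {Root} \<union> Mid ` {1,2,3} \<union> (\<lambda>(i,j). Ch i j) ` child_idx m n
                    \<union> (\<lambda>(i,j). Lf i j) ` child_idx m n"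

definition T3_edges :: "nat \<Rightarrow> nat \<Rightarrow> tvert set set" where
  "T3_edges m n = (\<lambda>i. {Root, Mid i}) ` {1,2,3}
                  \<union> (\<lambda>(i,j). {Mid i, Ch i j}) ` child_idx m n
                  \<union> (\<lambda>(i,j). {Ch i j, Lf i j}) ` child_idx m n"

definition T3star_verts :: "nat \<Rightarrow> nat \<Rightarrow> tvert set" where
  "T3star_verts m n = T3_verts m n \<union> {VX, VY}"

definition T3star_edges :: "nat \<Rightarrow> nat \<Rightarrow> tvert set set" where
  "T3star_edges m n = T3_edges m n \<union> {{Lf 1 3, VX}, {VX, VY}}"

end

theory Submission
  imports Defs
begin

(* Deleting the root v0, and then the vertices v1, v2, v3, splits T*_{3,m,n} into paths, so its
   independence polynomial has the closed form
     (1+t) (A + B),   A = R U_m U_n,   B = t (1+3t) (1+2t)^(m+n+2),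
   where U_m = (1+2t)^m + t (1+t)^m and R = 1 + 8t + 20t^2 + 16t^3 + t^4.
   R and U_m are PF2 (log-concave without internal zeros), hence so is A. In the
   likelihood-ratio order A lies between (1+2t)^(m+n+3) and (1+2t)^(m+n+6), whose modes are
   explicit; so with J = (2(m+n)+11) div 3, A increases before J - 1 and decreases after J,
   while B increases up to J and decreases from J on. This forces A + B to be unimodal, and
   multiplying a nonnegative unimodal sequence by 1 + t keeps it unimodal. *)

section \<open>Independence polynomials\<close>

lemma monom_Suc_eq_t_mult: "monom (1::'a::comm_semiring_1) (Suc k) = [:0,1:] * monom 1 k"
  by (simp add: monom_Suc)

lemma finite_independent_sets: "finite V \<Longrightarrow> finite {S. independent_set V E S}"
  unfolding independent_set_def by (rule finite_subset[of _ "Pow V"]) auto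

lemma indep_poly_empty:
  assumes "\<forall>e\<in>E. card e = 2"
  shows "indep_poly {} E = 1"
proof -
  have "{S. independent_set {} E S} = {{}}"
    using assms unfolding independent_set_def by force
  thus ?thesis unfolding indep_poly_def by (simp add: monom_0 one_pCons)
qed

lemma independent_sets_split_vertex:
  assumes v: "v \<in> V" and E2: "\<forall>e\<in>E. card e = 2"
  shows "{S. independent_set V E S} =
    {S. independent_set (V - {v}) E S} \<union> insert v ` {S. independent_set (V - {v} - {u. {v,u} \<in> E}) E S}"
    (is "_ = ?I0 \<union> insert v ` ?I1")
proof (intro equalityI subsetI)
  fix S assume "S \<in> {S. independent_set V E S}"
  hence SV: "S \<subseteq> V" and ind: "\<forall>e\<in>E. \<not> e \<subseteq> S" unfolding independent_set_def by auto
  show "S \<in> ?I0 \<union> insert v ` ?I1"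
  proof (cases "v \<in> S")
    case False
    thus ?thesis using SV ind unfolding independent_set_def by auto
  next
    case True
    have "{v,u} \<notin> E" if "u \<in> S" for u using ind True that by auto
    hence "S - {v} \<in> ?I1" using SV ind unfolding independent_set_def by auto
    moreover have "S = insert v (S - {v})" using True by auto
    ultimately show ?thesis by blast
  qed
next
  fix S assume "S \<in> ?I0 \<union> insert v ` ?I1"
  thus "S \<in> {S. independent_set V E S}"
  proof
    assume "S \<in> ?I0" thus ?thesis unfolding independent_set_def by auto
  next
    assume "S \<in> insert v ` ?I1"
    then obtain S' where S': "S = insert v S'" "S' \<in> ?I1" by auto
    have "\<not> e \<subseteq> insert v S'" if e: "e \<in> E" for e
    proof
      assume sub: "e \<subseteq> insert v S'"
      have "\<not> e \<subseteq> S'" using S'(2) e unfolding independent_set_def by auto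
      then obtain u where u: "e = {v,u}" "u \<noteq> v" using sub E2 e by (fastforce simp: card_2_iff)
      hence "u \<in> S'" using \<open>\<not> e \<subseteq> S'\<close> sub by auto
      thus False using S'(2) u e unfolding independent_set_def by auto
    qed
    thus ?thesis using S' v unfolding independent_set_def by auto
  qed
qed

lemma indep_poly_vertex_recurrence:
  assumes fin: "finite V" and v: "v \<in> V" and E2: "\<forall>e\<in>E. card e = 2"
  shows "indep_poly V E = indep_poly (V - {v}) E + [:0,1:] * indep_poly (V - {v} - {u. {v,u} \<in> E}) E"
proof -
  define I0 where "I0 = {S. independent_set (V - {v}) E S}"
  define I1 where "I1 = {S. independent_set (V - {v} - {u. {v,u} \<in> E}) E S}"
  have fin01: "finite I0" "finite I1" unfolding I0_def I1_def using fin by (auto intro: finite_independent_sets)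
  have members: "finite S" "v \<notin> S" if "S \<in> I1" for S
    using that fin unfolding I1_def independent_set_def by (auto intro: finite_subset)
  have inj: "inj_on (insert v) I1"
    by (rule inj_onI) (metis members(2) insert_ident)
  have "indep_poly V E = (\<Sum>S\<in>I0. monom 1 (card S)) + (\<Sum>S\<in>insert v ` I1. monom 1 (card S))"
    unfolding indep_poly_def independent_sets_split_vertex[OF v E2, folded I0_def I1_def]
    using fin01 by (intro sum.union_disjoint) (auto simp: I0_def independent_set_def)
  also have "(\<Sum>S\<in>insert v ` I1. monom (1::nat) (card S)) = (\<Sum>S\<in>I1. monom 1 (Suc (card S)))"
    using inj members by (simp add: sum.reindex)
  also have "\<dots> = [:0,1:] * (\<Sum>S\<in>I1. monom 1 (card S))"
    by (simp only: monom_Suc_eq_t_mult sum_distrib_left)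
  finally show ?thesis unfolding I0_def I1_def indep_poly_def .
qed

lemma independent_sets_disjoint_union:
  assumes disj: "V1 \<inter> V2 = {}"
    and sep: "\<forall>e\<in>E. e \<subseteq> V1 \<union> V2 \<longrightarrow> e \<subseteq> V1 \<or> e \<subseteq> V2"
  shows "bij_betw (\<lambda>(A, B). A \<union> B)
           ({S. independent_set V1 E S} \<times> {S. independent_set V2 E S}) {S. independent_set (V1 \<union> V2) E S}"
proof -
  let ?I1 = "{S. independent_set V1 E S}" and ?I2 = "{S. independent_set V2 E S}"
    and ?I = "{S. independent_set (V1 \<union> V2) E S}"
  let ?split = "\<lambda>S. (S \<inter> V1, S \<inter> V2)"
  have split_union: "\<forall>x\<in>?I1 \<times> ?I2. ?split ((\<lambda>(A, B). A \<union> B) x) = x"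
    using disj unfolding independent_set_def by auto
  have union_split: "\<forall>S\<in>?I. (\<lambda>(A, B). A \<union> B) (?split S) = S"
    unfolding independent_set_def by auto
  have split_into: "?split ` ?I \<subseteq> ?I1 \<times> ?I2"
    unfolding independent_set_def by auto
  have union_into: "(\<lambda>(A, B). A \<union> B) ` (?I1 \<times> ?I2) \<subseteq> ?I"
  proof clarify
    fix A B assume A: "independent_set V1 E A" and B: "independent_set V2 E B"
    have AB: "A \<subseteq> V1" "B \<subseteq> V2" "\<forall>e\<in>E. \<not> e \<subseteq> A" "\<forall>e\<in>E. \<not> e \<subseteq> B"
      using A B unfolding independent_set_def by auto
    have "\<not> e \<subseteq> A \<union> B" if e: "e \<in> E" for e
    proof
      assume sub: "e \<subseteq> A \<union> B"
      hence "e \<subseteq> V1 \<union> V2" using AB(1,2) by auto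
      hence "e \<subseteq> V1 \<or> e \<subseteq> V2" using sep e by simp
      hence "e \<subseteq> A \<or> e \<subseteq> B" using sub AB(1,2) disj by blast
      thus False using AB(3,4) e by auto
    qed
    thus "independent_set (V1 \<union> V2) E (A \<union> B)" using A B unfolding independent_set_def by auto
  qed
  show ?thesis by (rule bij_betw_byWitness[OF split_union union_split union_into split_into])
qed

lemma indep_poly_disjoint_union:
  assumes fin: "finite V1" "finite V2" and disj: "V1 \<inter> V2 = {}"
    and sep: "\<forall>e\<in>E. e \<subseteq> V1 \<union> V2 \<longrightarrow> e \<subseteq> V1 \<or> e \<subseteq> V2"
  shows "indep_poly (V1 \<union> V2) E = indep_poly V1 E * indep_poly V2 E"
proof -
  let ?I1 = "{S. independent_set V1 E S}" and ?I2 = "{S. independent_set V2 E S}"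
  have card_Un: "card (A \<union> B) = card A + card B" if "(A, B) \<in> ?I1 \<times> ?I2" for A B
    using that fin disj unfolding independent_set_def
    by (intro card_Un_disjoint) (auto intro: finite_subset)
  have "indep_poly (V1 \<union> V2) E = (\<Sum>(A, B)\<in>?I1 \<times> ?I2. monom 1 (card (A \<union> B)))"
    unfolding indep_poly_def
    by (subst sum.reindex_bij_betw[OF independent_sets_disjoint_union[OF disj sep], symmetric])
       (simp add: case_prod_unfold)
  also have "\<dots> = (\<Sum>(A, B)\<in>?I1 \<times> ?I2. monom 1 (card A) * monom 1 (card B))"
    by (intro sum.cong refl) (auto simp: card_Un mult_monom)
  also have "\<dots> = indep_poly V1 E * indep_poly V2 E"
    unfolding indep_poly_def sum_product sum.cartesian_product ..
  finally show ?thesis .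
qed

lemma indep_poly_singleton:
  assumes "\<forall>e\<in>E. card e = 2"
  shows "indep_poly {x} E = [:1,1:]"
  using indep_poly_vertex_recurrence[of "{x}" x E] indep_poly_empty[of E] assms by (simp add: one_pCons)

lemma indep_poly_edge:
  assumes E2: "\<forall>e\<in>E. card e = 2" and xy: "x \<noteq> y" and e: "{x,y} \<in> E"
  shows "indep_poly {x,y} E = [:1,2:]"
proof -
  have "{x,y} - {x} = {y}" "{x,y} - {x} - {u. {x,u} \<in> E} = {}" using xy e by auto
  thus ?thesis using indep_poly_vertex_recurrence[of "{x,y}" x E] E2
    indep_poly_empty[OF E2] indep_poly_singleton[OF E2] by simp
qed

lemma indep_poly_path3:
  assumes E2: "\<forall>e\<in>E. card e = 2" and d: "x \<noteq> y" "x \<noteq> z" "y \<noteq> z"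
    and e: "{x,y} \<in> E" "{y,z} \<in> E" "{x,z} \<notin> E"
  shows "indep_poly {x,y,z} E = [:1,3,1:]"
proof -
  have "{x,y,z} - {z} = {x,y}" "{x,y,z} - {z} - {u. {z,u} \<in> E} = {x}"
    using d e by (auto simp: insert_commute)
  thus ?thesis using indep_poly_vertex_recurrence[of "{x,y,z}" z E] E2
    indep_poly_edge[OF E2 d(1) e(1)] indep_poly_singleton[OF E2] by simp
qed

lemma indep_poly_path4:
  assumes E2: "\<forall>e\<in>E. card e = 2"
    and d: "w \<noteq> x" "w \<noteq> y" "w \<noteq> z" "x \<noteq> y" "x \<noteq> z" "y \<noteq> z"
    and e: "{w,x} \<in> E" "{x,y} \<in> E" "{y,z} \<in> E" "{w,y} \<notin> E" "{w,z} \<notin> E" "{x,z} \<notin> E"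
  shows "indep_poly {w,x,y,z} E = [:1,4,3:]"
proof -
  have "{w,x,y,z} - {z} = {w,x,y}" "{w,x,y,z} - {z} - {u. {z,u} \<in> E} = {w,x}"
    using d e by (auto simp: insert_commute)
  thus ?thesis using indep_poly_vertex_recurrence[of "{w,x,y,z}" z E] E2
    indep_poly_path3[OF E2 d(1,2,4) e(1,2,4)] indep_poly_edge[OF E2 d(1) e(1)] by simp
qed

lemma indep_poly_disjoint_union3:
  assumes fin: "finite A" "finite B" "finite C"
    and disj: "A \<inter> B = {}" "A \<inter> C = {}" "B \<inter> C = {}"
    and E2: "\<forall>e\<in>E. card e = 2"
    and sep: "\<forall>e\<in>E. e \<subseteq> A \<union> B \<union> C \<longrightarrow> e \<subseteq> A \<or> e \<subseteq> B \<or> e \<subseteq> C"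
  shows "indep_poly (A \<union> B \<union> C) E = indep_poly A E * indep_poly B E * indep_poly C E"
proof -
  have AB: "\<forall>e\<in>E. e \<subseteq> A \<union> B \<longrightarrow> e \<subseteq> A \<or> e \<subseteq> B"
  proof (intro ballI impI)
    fix e assume e: "e \<in> E" "e \<subseteq> A \<union> B"
    have "e \<noteq> {}" using E2 e(1) by fastforce
    hence "\<not> e \<subseteq> C" using e(2) disj(2,3) by blast
    thus "e \<subseteq> A \<or> e \<subseteq> B" using sep e by auto
  qed
  have AB_C: "\<forall>e\<in>E. e \<subseteq> A \<union> B \<union> C \<longrightarrow> e \<subseteq> A \<union> B \<or> e \<subseteq> C"
    using sep by auto
  have "indep_poly (A \<union> B \<union> C) E = indep_poly (A \<union> B) E * indep_poly C E"
    by (rule indep_poly_disjoint_union) (use fin disj AB_C in auto)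
  also have "indep_poly (A \<union> B) E = indep_poly A E * indep_poly B E"
    by (rule indep_poly_disjoint_union) (use fin disj AB in auto)
  finally show ?thesis .
qed

section \<open>The tree T*\<close>

lemma child_idx_iff:
  "(i,j) \<in> child_idx m n \<longleftrightarrow>
     (i = 1 \<and> 1 \<le> j \<and> j \<le> 3) \<or> (i = 2 \<and> 1 \<le> j \<and> j \<le> m) \<or> (i = 3 \<and> 1 \<le> j \<and> j \<le> n)"
  unfolding child_idx_def by auto

lemma T3star_edge_cases:
  assumes "e \<in> T3star_edges m n"
  shows "(\<exists>i\<in>{1,2,3}. e = {Root, Mid i}) \<or> (\<exists>i j. (i,j) \<in> child_idx m n \<and> e = {Mid i, Ch i j}) \<or>
     (\<exists>i j. (i,j) \<in> child_idx m n \<and> e = {Ch i j, Lf i j}) \<or> e = {Lf 1 3, VX} \<or> e = {VX, VY}"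
  using assms unfolding T3star_edges_def T3_edges_def by blast

lemma T3star_edges_memberI:
  "i \<in> {1,2,3} \<Longrightarrow> {Root, Mid i} \<in> T3star_edges m n"
  "(i,j) \<in> child_idx m n \<Longrightarrow> {Mid i, Ch i j} \<in> T3star_edges m n"
  "(i,j) \<in> child_idx m n \<Longrightarrow> {Ch i j, Lf i j} \<in> T3star_edges m n"
  "{Lf 1 3, VX} \<in> T3star_edges m n" "{VX, VY} \<in> T3star_edges m n"
proof -
  show "i \<in> {1,2,3} \<Longrightarrow> {Root, Mid i} \<in> T3star_edges m n"
    unfolding T3star_edges_def T3_edges_def by blast
  show "{Mid i, Ch i j} \<in> T3star_edges m n" if "(i,j) \<in> child_idx m n"
  proof -
    have "{Mid i, Ch i j} \<in> (\<lambda>(i,j). {Mid i, Ch i j}) ` child_idx m n"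
      using that by (rule rev_image_eqI) simp
    thus ?thesis unfolding T3star_edges_def T3_edges_def by blast
  qed
  show "{Ch i j, Lf i j} \<in> T3star_edges m n" if "(i,j) \<in> child_idx m n"
  proof -
    have "{Ch i j, Lf i j} \<in> (\<lambda>(i,j). {Ch i j, Lf i j}) ` child_idx m n"
      using that by (rule rev_image_eqI) simp
    thus ?thesis unfolding T3star_edges_def T3_edges_def by blast
  qed
  show "{Lf 1 3, VX} \<in> T3star_edges m n" "{VX, VY} \<in> T3star_edges m n"
    unfolding T3star_edges_def by auto
qed

lemma ball_T3star_edges:
  "(\<forall>e\<in>T3star_edges m n. P e) \<longleftrightarrow>
     (\<forall>i\<in>{1,2,3}. P {Root, Mid i}) \<and> (\<forall>i j. (i,j) \<in> child_idx m n \<longrightarrow> P {Mid i, Ch i j}) \<and>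
     (\<forall>i j. (i,j) \<in> child_idx m n \<longrightarrow> P {Ch i j, Lf i j}) \<and> P {Lf 1 3, VX} \<and> P {VX, VY}"
proof
  assume "\<forall>e\<in>T3star_edges m n. P e"
  thus "(\<forall>i\<in>{1,2,3}. P {Root, Mid i}) \<and> (\<forall>i j. (i,j) \<in> child_idx m n \<longrightarrow> P {Mid i, Ch i j}) \<and>
     (\<forall>i j. (i,j) \<in> child_idx m n \<longrightarrow> P {Ch i j, Lf i j}) \<and> P {Lf 1 3, VX} \<and> P {VX, VY}"
    using T3star_edges_memberI by simp
next
  assume H: "(\<forall>i\<in>{1,2,3}. P {Root, Mid i}) \<and> (\<forall>i j. (i,j) \<in> child_idx m n \<longrightarrow> P {Mid i, Ch i j}) \<and>
     (\<forall>i j. (i,j) \<in> child_idx m n \<longrightarrow> P {Ch i j, Lf i j}) \<and> P {Lf 1 3, VX} \<and> P {VX, VY}"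
  show "\<forall>e\<in>T3star_edges m n. P e"
    using T3star_edge_cases H by fastforce
qed

lemma card_T3star_edge: "\<forall>e\<in>T3star_edges m n. card e = 2"
  unfolding ball_T3star_edges by simp

lemma neighbours_Root: "{Root, u} \<in> T3star_edges m n \<longleftrightarrow> u \<in> {Mid 1, Mid 2, Mid 3}"
  using T3star_edge_cases[of "{Root, u}" m n] T3star_edges_memberI(1)
  by (auto simp: doubleton_eq_iff)

lemma neighbours_Mid:
  "{Mid i, u} \<in> T3star_edges m n \<longleftrightarrow>
     (i \<in> {1,2,3} \<and> u = Root) \<or> (\<exists>j. (i,j) \<in> child_idx m n \<and> u = Ch i j)"
  using T3star_edge_cases[of "{Mid i, u}" m n] T3star_edges_memberI(1,2)
  by (auto simp: doubleton_eq_iff insert_commute)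

definition pendant_edges :: "nat \<Rightarrow> nat \<Rightarrow> tvert set" where
  "pendant_edges i k = (\<Union>j\<in>{1..k}. {Ch i j, Lf i j})"

definition pendant_leaves :: "nat \<Rightarrow> nat \<Rightarrow> tvert set" where
  "pendant_leaves i k = Lf i ` {1..k}"

lemma indep_poly_pendant_edges:
  assumes "\<forall>j\<in>{1..k}. (i,j) \<in> child_idx m n"
  shows "indep_poly (pendant_edges i k) (T3star_edges m n) = [:1,2:]^k"
  using assms
proof (induction k)
  case 0
  thus ?case using indep_poly_empty[OF card_T3star_edge] by (simp add: pendant_edges_def)
next
  case (Suc k)
  have "pendant_edges i (Suc k) = pendant_edges i k \<union> {Ch i (Suc k), Lf i (Suc k)}"
    unfolding pendant_edges_def by (auto simp: atLeastAtMostSuc_conv)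
  moreover have "indep_poly (pendant_edges i k \<union> {Ch i (Suc k), Lf i (Suc k)}) (T3star_edges m n)
      = indep_poly (pendant_edges i k) (T3star_edges m n) * indep_poly {Ch i (Suc k), Lf i (Suc k)} (T3star_edges m n)"
    by (rule indep_poly_disjoint_union)
       (auto simp: pendant_edges_def ball_T3star_edges)
  moreover have "indep_poly {Ch i (Suc k), Lf i (Suc k)} (T3star_edges m n) = [:1,2:]"
    using Suc.prems by (intro indep_poly_edge card_T3star_edge T3star_edges_memberI) auto
  ultimately show ?case using Suc by (simp add: mult.commute)
qed

lemma indep_poly_pendant_leaves:
  "indep_poly (pendant_leaves i k) (T3star_edges m n) = [:1,1:]^k"
proof (induction k)
  case 0
  thus ?case using indep_poly_empty[OF card_T3star_edge] by (simp add: pendant_leaves_def)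
next
  case (Suc k)
  have "pendant_leaves i (Suc k) = pendant_leaves i k \<union> {Lf i (Suc k)}"
    unfolding pendant_leaves_def by (auto simp: atLeastAtMostSuc_conv)
  moreover have "indep_poly (pendant_leaves i k \<union> {Lf i (Suc k)}) (T3star_edges m n)
      = indep_poly (pendant_leaves i k) (T3star_edges m n) * indep_poly {Lf i (Suc k)} (T3star_edges m n)"
    by (rule indep_poly_disjoint_union)
       (auto simp: pendant_leaves_def ball_T3star_edges)
  ultimately show ?case
    using Suc indep_poly_singleton[OF card_T3star_edge] by (simp add: mult.commute)
qed

definition descendants :: "nat \<Rightarrow> nat \<Rightarrow> nat \<Rightarrow> tvert set" where
  "descendants m n i = {v. \<exists>j. (i,j) \<in> child_idx m n \<and> (v = Ch i j \<or> v = Lf i j)}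
                        \<union> (if i = 1 then {VX, VY} else {})"

definition far_descendants :: "nat \<Rightarrow> nat \<Rightarrow> nat \<Rightarrow> tvert set" where
  "far_descendants m n i = {v. \<exists>j. (i,j) \<in> child_idx m n \<and> v = Lf i j}
                            \<union> (if i = 1 then {VX, VY} else {})"

definition branch :: "nat \<Rightarrow> nat \<Rightarrow> nat \<Rightarrow> tvert set" where
  "branch m n i = insert (Mid i) (descendants m n i)"

lemma descendants_eq:
  "descendants m n 1 = pendant_edges 1 2 \<union> {Ch 1 3, Lf 1 3, VX, VY}"
  "descendants m n 2 = pendant_edges 2 m"
  "descendants m n 3 = pendant_edges 3 n"
  unfolding descendants_def pendant_edges_def child_idx_iff by auto

lemma far_descendants_eq:
  "far_descendants m n 1 = pendant_leaves 1 2 \<union> {Lf 1 3, VX, VY}"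
  "far_descendants m n 2 = pendant_leaves 2 m"
  "far_descendants m n 3 = pendant_leaves 3 n"
  unfolding far_descendants_def pendant_leaves_def child_idx_iff by auto

lemma finite_descendants: "finite (descendants m n i)"
proof -
  have "descendants m n i \<subseteq> pendant_edges i (max 3 (max m n)) \<union> {VX, VY}"
    unfolding descendants_def pendant_edges_def child_idx_iff by auto
  thus ?thesis by (rule finite_subset) (simp add: pendant_edges_def)
qed

lemma indep_poly_descendants_1:
  "indep_poly (descendants m n 1) (T3star_edges m n) = [:1,2:]^2 * [:1,4,3:]"
proof -
  have "indep_poly (descendants m n 1) (T3star_edges m n)
      = indep_poly (pendant_edges 1 2) (T3star_edges m n) * indep_poly {Ch 1 3, Lf 1 3, VX, VY} (T3star_edges m n)"
    unfolding descendants_eq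
    by (rule indep_poly_disjoint_union) (auto simp: pendant_edges_def ball_T3star_edges)
  moreover have "indep_poly (pendant_edges 1 2) (T3star_edges m n) = [:1,2:]^2"
    by (rule indep_poly_pendant_edges) (auto simp: child_idx_iff)
  moreover have "indep_poly {Ch 1 3, Lf 1 3, VX, VY} (T3star_edges m n) = [:1,4,3:]"
    by (rule indep_poly_path4[OF card_T3star_edge _ _ _ _ _ _ T3star_edges_memberI(3)[of 1 3]
          T3star_edges_memberI(4,5)]) (auto simp: child_idx_iff dest: T3star_edge_cases)
  ultimately show ?thesis by simp
qed

lemma indep_poly_far_descendants_1:
  "indep_poly (far_descendants m n 1) (T3star_edges m n) = [:1,1:]^2 * [:1,3,1:]"
proof -
  have "indep_poly (far_descendants m n 1) (T3star_edges m n)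
      = indep_poly (pendant_leaves 1 2) (T3star_edges m n) * indep_poly {Lf 1 3, VX, VY} (T3star_edges m n)"
    unfolding far_descendants_eq
    by (rule indep_poly_disjoint_union) (auto simp: pendant_leaves_def ball_T3star_edges)
  moreover have "indep_poly {Lf 1 3, VX, VY} (T3star_edges m n) = [:1,3,1:]"
    by (rule indep_poly_path3[OF card_T3star_edge _ _ _ T3star_edges_memberI(4,5)])
       (auto dest: T3star_edge_cases)
  ultimately show ?thesis using indep_poly_pendant_leaves by simp
qed

lemma indep_poly_branch:
  assumes "i \<in> {1,2,3}"
  shows "indep_poly (branch m n i) (T3star_edges m n) =
    indep_poly (descendants m n i) (T3star_edges m n) + [:0,1:] * indep_poly (far_descendants m n i) (T3star_edges m n)"
proof -
  have "branch m n i - {Mid i} = descendants m n i"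
    unfolding branch_def descendants_def by auto
  moreover have "descendants m n i - {u. {Mid i, u} \<in> T3star_edges m n} = far_descendants m n i"
    unfolding descendants_def far_descendants_def neighbours_Mid by auto
  ultimately show ?thesis
    using indep_poly_vertex_recurrence[of "branch m n i" "Mid i" "T3star_edges m n"]
    by (simp add: branch_def finite_descendants card_T3star_edge)
qed

lemma T3star_verts_minus_Root: "T3star_verts m n - {Root} = branch m n 1 \<union> branch m n 2 \<union> branch m n 3"
  unfolding T3star_verts_def T3_verts_def branch_def descendants_def by (auto simp: child_idx_iff)

lemma T3star_verts_minus_closed_nbhd_Root:
  "T3star_verts m n - {Root} - {u. {Root, u} \<in> T3star_edges m n}
     = descendants m n 1 \<union> descendants m n 2 \<union> descendants m n 3"
  unfolding T3star_verts_minus_Root neighbours_Root branch_def descendants_def by auto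

lemma finite_T3star_verts: "finite (T3star_verts m n)"
proof -
  have "child_idx m n \<subseteq> {1..3} \<times> {1..max 3 (max m n)}" by (auto simp: child_idx_iff)
  hence "finite (child_idx m n)" by (rule finite_subset) simp
  thus ?thesis unfolding T3star_verts_def T3_verts_def by simp
qed

lemma indep_poly_T3star:
  "indep_poly (T3star_verts m n) (T3star_edges m n) =
     ([:1,2:]^2 * [:1,4,3:] + [:0,1:] * ([:1,1:]^2 * [:1,3,1:])) *
     ([:1,2:]^m + [:0,1:] * [:1,1:]^m) * ([:1,2:]^n + [:0,1:] * [:1,1:]^n)
     + [:0,1:] * ([:1,2:]^2 * [:1,4,3:] * [:1,2:]^m * [:1,2:]^n)"
proof -
  let ?E = "T3star_edges m n"
  have finite_branch: "finite (branch m n i)" for i by (simp add: branch_def finite_descendants)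
  have "indep_poly (T3star_verts m n) ?E = indep_poly (T3star_verts m n - {Root}) ?E
      + [:0,1:] * indep_poly (T3star_verts m n - {Root} - {u. {Root, u} \<in> ?E}) ?E"
    by (rule indep_poly_vertex_recurrence[OF finite_T3star_verts _ card_T3star_edge])
       (simp add: T3star_verts_def T3_verts_def)
  also have "indep_poly (T3star_verts m n - {Root}) ?E =
      indep_poly (branch m n 1) ?E * indep_poly (branch m n 2) ?E * indep_poly (branch m n 3) ?E"
    unfolding T3star_verts_minus_Root
    by (rule indep_poly_disjoint_union3[OF finite_branch finite_branch finite_branch _ _ _ card_T3star_edge])
       (auto simp: branch_def descendants_def ball_T3star_edges child_idx_iff)
  also have "indep_poly (T3star_verts m n - {Root} - {u. {Root, u} \<in> ?E}) ?E =
      indep_poly (descendants m n 1) ?E * indep_poly (descendants m n 2) ?E * indep_poly (descendants m n 3) ?E"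
    unfolding T3star_verts_minus_closed_nbhd_Root
    by (rule indep_poly_disjoint_union3[OF finite_descendants finite_descendants finite_descendants _ _ _
          card_T3star_edge])
       (auto simp: descendants_def ball_T3star_edges child_idx_iff)
  also have "indep_poly (descendants m n 2) ?E = [:1,2:]^m"
    unfolding descendants_eq by (rule indep_poly_pendant_edges) (auto simp: child_idx_iff)
  also have "indep_poly (descendants m n 3) ?E = [:1,2:]^n"
    unfolding descendants_eq by (rule indep_poly_pendant_edges) (auto simp: child_idx_iff)
  also have "indep_poly (branch m n 1) ?E = [:1,2:]^2 * [:1,4,3:] + [:0,1:] * ([:1,1:]^2 * [:1,3,1:])"
    using indep_poly_branch[of 1 m n] indep_poly_descendants_1 indep_poly_far_descendants_1 by simp
  also have "indep_poly (branch m n 2) ?E = [:1,2:]^m + [:0,1:] * [:1,1:]^m"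
    using indep_poly_branch[of 2 m n] indep_poly_pendant_edges[of m 2]
    by (simp add: descendants_eq far_descendants_eq indep_poly_pendant_leaves child_idx_iff)
  also have "indep_poly (branch m n 3) ?E = [:1,2:]^n + [:0,1:] * [:1,1:]^n"
    using indep_poly_branch[of 3 m n]
    by (simp add: descendants_eq far_descendants_eq indep_poly_pendant_edges indep_poly_pendant_leaves child_idx_iff)
  finally show ?thesis unfolding indep_poly_descendants_1 .
qed

section \<open>PF2 polynomials and the likelihood-ratio order\<close>

(* Nonnegative coefficients whose Toeplitz matrix has nonnegative 2x2 minors,
   i.e. log-concave without internal zeros. *)
definition pf2 :: "real poly \<Rightarrow> bool" where
  "pf2 p \<longleftrightarrow> (\<forall>i. 0 \<le> coeff p i) \<and>
     (\<forall>x u v. coeff p x * coeff p (x+u+v) \<le> coeff p (x+u) * coeff p (x+v))"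

(* p is below q in the likelihood-ratio order: q_k / p_k is nondecreasing in k
   (in cross-multiplied form). *)
definition lr_le :: "real poly \<Rightarrow> real poly \<Rightarrow> bool" where
  "lr_le p q \<longleftrightarrow> (\<forall>i. 0 \<le> coeff p i) \<and> (\<forall>i. 0 \<le> coeff q i) \<and>
     (\<forall>i j. i \<le> j \<longrightarrow> coeff p j * coeff q i \<le> coeff p i * coeff q j)"

definition pos_coeffs :: "real poly \<Rightarrow> bool" where
  "pos_coeffs p \<longleftrightarrow> (\<forall>k \<le> degree p. 0 < coeff p k)"

lemma coeff_mult_nonneg:
  fixes p q :: "real poly"
  assumes "\<And>i. 0 \<le> coeff p i" "\<And>i. 0 \<le> coeff q i"
  shows "0 \<le> coeff (p * q) k"
  unfolding coeff_mult by (auto intro!: sum_nonneg mult_nonneg_nonneg assms)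

lemma double_sum_nonneg_by_symmetry:
  fixes F :: "'a \<Rightarrow> 'a \<Rightarrow> real"
  assumes "\<And>x y. x \<in> S \<Longrightarrow> y \<in> S \<Longrightarrow> 0 \<le> F x y + F y x"
  shows "0 \<le> (\<Sum>x\<in>S. \<Sum>y\<in>S. F x y)"
proof -
  have "2 * (\<Sum>x\<in>S. \<Sum>y\<in>S. F x y) = (\<Sum>x\<in>S. \<Sum>y\<in>S. F x y + F y x)"
    using sum.swap[of F S S] by (simp add: sum.distrib)
  also have "\<dots> \<ge> 0" by (intro sum_nonneg assms)
  finally show ?thesis by simp
qed

definition toeplitz_entry :: "real poly \<Rightarrow> nat \<Rightarrow> nat \<Rightarrow> real" where
  "toeplitz_entry g k x = (if x \<le> k then coeff g (k - x) else 0)"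

lemma coeff_mult_toeplitz:
  assumes "k \<le> j"
  shows "coeff (r * g) k = (\<Sum>x\<le>j. coeff r x * toeplitz_entry g k x)"
proof -
  have "coeff (r * g) k = (\<Sum>x\<le>k. coeff r x * toeplitz_entry g k x)"
    unfolding coeff_mult toeplitz_entry_def by (intro sum.cong) auto
  also have "\<dots> = (\<Sum>x\<le>j. coeff r x * toeplitz_entry g k x)"
    using assms by (intro sum.mono_neutral_left) (auto simp: toeplitz_entry_def)
  finally show ?thesis .
qed

lemma pf2_toeplitz_minor:
  assumes g: "pf2 g" and "i \<le> j" "x \<le> y"
  shows "toeplitz_entry g j x * toeplitz_entry g i y \<le> toeplitz_entry g i x * toeplitz_entry g j y"
proof (cases "y \<le> i")
  case True
  define z u v where "z = i - y" and "u = y - x" and "v = j - i"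
  have shifts: "i - x = z + u" "j - y = z + v" "j - x = z + u + v" "i - y = z"
    using assms True unfolding z_def u_def v_def by auto
  have "toeplitz_entry g j x * toeplitz_entry g i y = coeff g z * coeff g (z + u + v)"
    unfolding toeplitz_entry_def using assms True shifts by (auto simp: mult.commute)
  also have "\<dots> \<le> coeff g (z + u) * coeff g (z + v)"
    using g unfolding pf2_def by blast
  also have "\<dots> = toeplitz_entry g i x * toeplitz_entry g j y"
    unfolding toeplitz_entry_def using assms True shifts by auto
  finally show ?thesis .
next
  case False
  thus ?thesis using g unfolding pf2_def toeplitz_entry_def by auto
qed

(* Cauchy-Binet: each 2x2 minor of the coefficient rows of p g and q g is a symmetrised sum
   of products of a minor of (p, q) and a minor of the Toeplitz matrix of g. *)
lemma lr_le_mult_pf2: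
  assumes lr: "lr_le p q" and g: "pf2 g"
  shows "lr_le (p * g) (q * g)"
proof -
  have pn: "\<And>i. 0 \<le> coeff p i" and qn: "\<And>i. 0 \<le> coeff q i"
    and pq: "\<And>i j. i \<le> j \<Longrightarrow> coeff p j * coeff q i \<le> coeff p i * coeff q j"
    and gn: "\<And>i. 0 \<le> coeff g i"
    using lr g unfolding lr_le_def pf2_def by auto
  let ?K = "toeplitz_entry g"
  have minor: "coeff (p * g) j * coeff (q * g) i \<le> coeff (p * g) i * coeff (q * g) j" if ij: "i \<le> j" for i j
  proof -
    define F where "F x y = coeff p x * coeff q y * (?K i x * ?K j y - ?K j x * ?K i y)" for x y
    have "coeff (p * g) i * coeff (q * g) j - coeff (p * g) j * coeff (q * g) i
        = (\<Sum>x\<le>j. \<Sum>y\<le>j. F x y)"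
      unfolding coeff_mult_toeplitz[OF ij] coeff_mult_toeplitz[OF order_refl[of j]] sum_product F_def
      by (simp add: sum_subtractf[symmetric] algebra_simps)
    also have "\<dots> \<ge> 0"
    proof (rule double_sum_nonneg_by_symmetry)
      fix x y
      have eq: "F x y + F y x = (coeff p x * coeff q y - coeff p y * coeff q x) *
                                (?K i x * ?K j y - ?K j x * ?K i y)"
        unfolding F_def by (simp add: algebra_simps)
      show "0 \<le> F x y + F y x"
      proof (cases "x \<le> y")
        case True
        thus ?thesis unfolding eq
          using pq[OF True] pf2_toeplitz_minor[OF g ij True] by simp
      next
        case False
        hence "y \<le> x" by simp
        thus ?thesis unfolding eq
          using pq[OF \<open>y \<le> x\<close>] pf2_toeplitz_minor[OF g ij \<open>y \<le> x\<close>]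
          by (intro mult_nonpos_nonpos) (simp_all add: algebra_simps)
      qed
    qed
    finally show ?thesis by simp
  qed
  show ?thesis unfolding lr_le_def
    using minor coeff_mult_nonneg[OF pn gn] coeff_mult_nonneg[OF qn gn] by auto
qed

lemma pf2_iff_lr_le_shift:
  "pf2 p \<longleftrightarrow> (\<forall>i. 0 \<le> coeff p i) \<and> (\<forall>u. lr_le p (monom 1 u * p))"
proof
  assume "pf2 p"
  hence pn: "\<And>i. 0 \<le> coeff p i"
    and pp: "\<And>x u v. coeff p x * coeff p (x+u+v) \<le> coeff p (x+u) * coeff p (x+v)"
    unfolding pf2_def by auto
  have "lr_le p (monom 1 u * p)" for u
    unfolding lr_le_def
  proof (intro conjI allI impI)
    fix i j :: nat assume ij: "i \<le> j"
    show "coeff p j * coeff (monom 1 u * p) i \<le> coeff p i * coeff (monom 1 u * p) j"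
    proof (cases "i < u")
      case True thus ?thesis using pn ij by (auto simp: coeff_monom_mult)
    next
      case False
      have "coeff p (i-u + u + (j-i)) * coeff p (i-u) \<le> coeff p (i-u+u) * coeff p (i-u + (j-i))"
        using pp[of "i-u" u "j-i"] by (simp add: mult.commute)
      moreover have "i-u + u + (j-i) = j" "i-u+u = i" "i-u + (j-i) = j - u"
        using False ij by auto
      ultimately show ?thesis using False ij by (auto simp: coeff_monom_mult)
    qed
  qed (use pn in \<open>auto simp: coeff_monom_mult\<close>)
  thus "(\<forall>i. 0 \<le> coeff p i) \<and> (\<forall>u. lr_le p (monom 1 u * p))" using pn by auto
next
  assume shifts: "(\<forall>i. 0 \<le> coeff p i) \<and> (\<forall>u. lr_le p (monom 1 u * p))"
  show "pf2 p" unfolding pf2_def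
  proof (intro conjI allI)
    fix x u v
    have "coeff p (x+u+v) * coeff (monom 1 u * p) (x+u) \<le> coeff p (x+u) * coeff (monom 1 u * p) (x+u+v)"
      using shifts unfolding lr_le_def by auto
    hence "coeff p (x+u+v) * coeff p x \<le> coeff p (x+u) * coeff p (x+v)"
      by (simp add: coeff_monom_mult)
    thus "coeff p x * coeff p (x + u + v) \<le> coeff p (x + u) * coeff p (x + v)"
      by (simp add: mult.commute)
  qed (use shifts in auto)
qed

lemma pf2_mult:
  assumes "pf2 p" "pf2 q"
  shows "pf2 (p * q)"
proof -
  have "lr_le (p * q) (monom 1 u * (p * q))" for u
  proof -
    have "lr_le p (monom 1 u * p)" using assms(1) unfolding pf2_iff_lr_le_shift by auto
    from lr_le_mult_pf2[OF this assms(2)] show ?thesis by (simp add: mult.assoc)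
  qed
  moreover have "0 \<le> coeff (p * q) i" for i
    using assms by (intro coeff_mult_nonneg) (auto simp: pf2_def)
  ultimately show ?thesis unfolding pf2_iff_lr_le_shift by auto
qed

lemma pf2_1: "pf2 1"
  unfolding pf2_def by (auto simp: coeff_1)

lemma pf2_power: "pf2 p \<Longrightarrow> pf2 (p ^ n)"
  by (induction n) (simp_all add: pf2_1 pf2_mult)

lemma consecutive_ratio_chain:
  fixes p q :: "real poly"
  assumes pn: "\<And>i. 0 \<le> coeff p i" and qn: "\<And>i. 0 \<le> coeff q i"
    and consecutive: "\<And>k. coeff p (Suc k) * coeff q k \<le> coeff p k * coeff q (Suc k)"
    and deg: "degree p \<le> degree q"
    and qpos: "\<And>k. i \<le> k \<Longrightarrow> k \<le> degree q \<Longrightarrow> 0 < coeff q k"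
  shows "coeff p (i + d) * coeff q i \<le> coeff p i * coeff q (i + d)"
proof (induction d)
  case 0 show ?case by (simp add: mult.commute)
next
  case (Suc d)
  show ?case
  proof (cases "i + Suc d \<le> degree q")
    case False
    hence "coeff p (i + Suc d) = 0" using deg by (intro coeff_eq_0) auto
    thus ?thesis using pn qn by simp
  next
    case True
    have "coeff p (Suc (i+d)) * coeff q i * coeff q (i+d)
        = (coeff p (Suc (i+d)) * coeff q (i+d)) * coeff q i" by (simp add: algebra_simps)
    also have "\<dots> \<le> (coeff p (i+d) * coeff q (Suc (i+d))) * coeff q i"
      using consecutive qn by (intro mult_right_mono) auto
    also have "\<dots> = (coeff p (i+d) * coeff q i) * coeff q (Suc (i+d))" by (simp add: algebra_simps)
    also have "\<dots> \<le> (coeff p i * coeff q (i+d)) * coeff q (Suc (i+d))"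
      using Suc.IH qn by (intro mult_right_mono) auto
    finally have "(coeff p (Suc (i+d)) * coeff q i) * coeff q (i+d)
                   \<le> (coeff p i * coeff q (Suc (i+d))) * coeff q (i+d)" by (simp add: algebra_simps)
    moreover have "0 < coeff q (i+d)" using True by (intro qpos) auto
    ultimately show ?thesis by (simp add: mult_le_cancel_right)
  qed
qed

lemma lr_le_of_consecutive:
  fixes p q :: "real poly"
  assumes pn: "\<And>i. 0 \<le> coeff p i" and qn: "\<And>i. 0 \<le> coeff q i"
    and consecutive: "\<And>k. coeff p (Suc k) * coeff q k \<le> coeff p k * coeff q (Suc k)"
    and deg: "degree p \<le> degree q"
    and qpos: "\<And>k. lo \<le> k \<Longrightarrow> k \<le> degree q \<Longrightarrow> 0 < coeff q k"
    and qzero: "\<And>k. k < lo \<Longrightarrow> coeff q k = 0"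
  shows "lr_le p q"
  unfolding lr_le_def
proof (intro conjI allI impI)
  fix i j :: nat assume ij: "i \<le> j"
  show "coeff p j * coeff q i \<le> coeff p i * coeff q j"
  proof (cases "lo \<le> i")
    case True
    thus ?thesis using consecutive_ratio_chain[OF pn qn consecutive deg, of i "j - i"] qpos ij by simp
  next
    case False
    thus ?thesis using qzero pn qn by simp
  qed
qed (use pn qn in auto)

lemma log_concave_ratio_chain:
  fixes p :: "real poly"
  assumes pn: "\<And>i. 0 \<le> coeff p i" and pos: "pos_coeffs p"
    and lc: "\<And>k. coeff p k * coeff p (Suc (Suc k)) \<le> coeff p (Suc k) * coeff p (Suc k)"
  shows "coeff p (w + u + 1) * coeff p w \<le> coeff p (w + u) * coeff p (w + 1)"
proof (induction u arbitrary: w)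
  case 0 show ?case by (simp add: mult.commute)
next
  case (Suc u)
  show ?case
  proof (cases "w + 1 \<le> degree p")
    case False
    hence "coeff p (w + Suc u + 1) = 0" by (intro coeff_eq_0) auto
    thus ?thesis using pn by simp
  next
    case True
    have "coeff p (w + Suc u + 1) * coeff p w * coeff p (w+1)
        = (coeff p (w+1+u+1) * coeff p (w+1)) * coeff p w" by (simp add: algebra_simps)
    also have "\<dots> \<le> (coeff p (w+1+u) * coeff p (w+1+1)) * coeff p w"
      using Suc.IH[of "w+1"] pn by (intro mult_right_mono) auto
    also have "\<dots> = coeff p (w+1+u) * (coeff p w * coeff p (Suc (Suc w)))" by (simp add: algebra_simps)
    also have "\<dots> \<le> coeff p (w+1+u) * (coeff p (w+1) * coeff p (w+1))"
      using lc[of w] pn by (intro mult_left_mono) auto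
    finally have "(coeff p (w + Suc u + 1) * coeff p w) * coeff p (w+1)
        \<le> (coeff p (w + Suc u) * coeff p (w+1)) * coeff p (w+1)" by (simp add: algebra_simps)
    moreover have "0 < coeff p (w+1)" using True pos unfolding pos_coeffs_def by auto
    ultimately show ?thesis by (simp add: mult_le_cancel_right)
  qed
qed

lemma pf2_of_log_concave:
  fixes p :: "real poly"
  assumes pn: "\<And>i. 0 \<le> coeff p i" and pos: "pos_coeffs p"
    and lc: "\<And>k. coeff p k * coeff p (Suc (Suc k)) \<le> coeff p (Suc k) * coeff p (Suc k)"
  shows "pf2 p"
proof (cases "p = 0")
  case True thus ?thesis unfolding pf2_def by simp
next
  case False
  have degree_shift: "degree (monom 1 u * p) = degree p + u" for u :: nat
    using False by (simp add: degree_mult_eq degree_monom_eq)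
  have "lr_le p (monom 1 u * p)" for u
  proof (rule lr_le_of_consecutive[where lo = u])
    show "coeff p (Suc k) * coeff (monom 1 u * p) k \<le> coeff p k * coeff (monom 1 u * p) (Suc k)" for k
    proof (cases "k < u")
      case True thus ?thesis using pn by (auto simp: coeff_monom_mult)
    next
      case False
      have "coeff p (k-u+u+1) * coeff p (k-u) \<le> coeff p (k-u+u) * coeff p (k-u+1)"
        by (rule log_concave_ratio_chain[OF pn pos lc])
      moreover have "k-u+u+1 = Suc k" "k-u+u = k" "k - u + 1 = Suc k - u" using False by auto
      ultimately show ?thesis using False by (simp add: coeff_monom_mult)
    qed
    show "0 < coeff (monom 1 u * p) k" if "u \<le> k" "k \<le> degree (monom 1 u * p)" for k
      using that pos by (auto simp: coeff_monom_mult degree_shift pos_coeffs_def)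
  qed (use pn in \<open>auto simp: coeff_monom_mult degree_shift\<close>)
  thus ?thesis unfolding pf2_iff_lr_le_shift using pn by auto
qed

lemma lr_le_increasing_step:
  assumes "lr_le p q" "0 < coeff p k" "coeff p k \<le> coeff p (Suc k)"
  shows "coeff q k \<le> coeff q (Suc k)"
proof -
  have "coeff p k * coeff q k \<le> coeff p (Suc k) * coeff q k"
    using assms(1,3) unfolding lr_le_def by (intro mult_right_mono) auto
  also have "\<dots> \<le> coeff p k * coeff q (Suc k)"
    using assms(1) unfolding lr_le_def by auto
  finally show ?thesis using assms(2) by (simp add: mult_le_cancel_left)
qed

lemma lr_le_decreasing_step:
  assumes "lr_le p q" "0 < coeff q k" "coeff q (Suc k) \<le> coeff q k"
  shows "coeff p (Suc k) \<le> coeff p k"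
proof -
  have "coeff p (Suc k) * coeff q k \<le> coeff p k * coeff q (Suc k)"
    using assms(1) unfolding lr_le_def by auto
  also have "\<dots> \<le> coeff p k * coeff q k"
    using assms(1,3) unfolding lr_le_def by (intro mult_left_mono) auto
  finally show ?thesis using assms(2) by (simp add: mult_le_cancel_right)
qed

lemma pf2_increasing_below:
  assumes "pf2 p" "0 < coeff p k" "coeff p k \<le> coeff p (Suc k)" "k' \<le> k"
  shows "coeff p k' \<le> coeff p (Suc k')"
proof -
  have pn: "\<And>i. 0 \<le> coeff p i"
    and pp: "\<And>x u v. coeff p x * coeff p (x+u+v) \<le> coeff p (x+u) * coeff p (x+v)"
    using assms(1) unfolding pf2_def by auto
  have "coeff p k * coeff p k' \<le> coeff p k' * coeff p (Suc k)"
    using mult_left_mono[OF assms(3) pn[of k']] by (simp add: mult.commute)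
  also have "\<dots> \<le> coeff p (Suc k') * coeff p k"
    using pp[of k' 1 "k - k'"] assms(4) by simp
  finally show ?thesis using assms(2) by (simp add: mult.commute mult_le_cancel_left)
qed

lemma pf2_decreasing_above:
  assumes "pf2 p" "0 < coeff p k" "coeff p (Suc k) \<le> coeff p k" "k \<le> k'"
  shows "coeff p (Suc k') \<le> coeff p k'"
proof -
  have pn: "\<And>i. 0 \<le> coeff p i"
    and pp: "\<And>x u v. coeff p x * coeff p (x+u+v) \<le> coeff p (x+u) * coeff p (x+v)"
    using assms(1) unfolding pf2_def by auto
  have "coeff p k * coeff p (Suc k') \<le> coeff p k' * coeff p (Suc k)"
    using pp[of k "k' - k" 1] assms(4) by simp
  also have "\<dots> \<le> coeff p k' * coeff p k"
    using assms(3) pn by (intro mult_left_mono) auto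
  finally show ?thesis using assms(2) by (simp add: mult.commute mult_le_cancel_left)
qed

lemma pos_coeffs_nonzero: "pos_coeffs p \<Longrightarrow> p \<noteq> 0"
  unfolding pos_coeffs_def by (metis coeff_0 le0 less_irrefl)

lemma pos_coeffs_nonneg: "pos_coeffs p \<Longrightarrow> 0 \<le> coeff p k"
  unfolding pos_coeffs_def by (cases "k \<le> degree p") (auto simp: coeff_eq_0 less_imp_le)

lemma degree_mult_pos_coeffs: "pos_coeffs p \<Longrightarrow> pos_coeffs q \<Longrightarrow> degree (p * q) = degree p + degree q"
  using pos_coeffs_nonzero by (simp add: degree_mult_eq)

lemma pos_coeffs_mult:
  assumes "pos_coeffs p" "pos_coeffs q"
  shows "pos_coeffs (p * q)"
  unfolding pos_coeffs_def degree_mult_pos_coeffs[OF assms]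
proof (intro allI impI)
  fix k assume k: "k \<le> degree p + degree q"
  define i where "i = min k (degree p)"
  have i: "i \<le> k" "i \<le> degree p" "k - i \<le> degree q" using k unfolding i_def by auto
  have "0 < coeff p i * coeff q (k - i)" using i assms unfolding pos_coeffs_def by auto
  also have "\<dots> \<le> (\<Sum>i\<le>k. coeff p i * coeff q (k - i))"
    using i assms by (intro member_le_sum) (auto intro: mult_nonneg_nonneg pos_coeffs_nonneg)
  finally show "0 < coeff (p * q) k" by (simp add: coeff_mult)
qed

lemma pos_coeffs_power:
  assumes "pos_coeffs p"
  shows "pos_coeffs (p ^ n)"
proof (induction n)
  case 0 show ?case by (simp add: pos_coeffs_def)
next
  case (Suc n) thus ?case using assms by (simp add: pos_coeffs_mult)
qed

lemma pos_coeffs_linear: "0 < x \<Longrightarrow> 0 < y \<Longrightarrow> pos_coeffs [:x, y:]"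
  unfolding pos_coeffs_def by (auto simp: le_Suc_eq)

lemma pf2_linear: "0 < x \<Longrightarrow> 0 < y \<Longrightarrow> pf2 [:x, y:]"
  by (rule pf2_of_log_concave) (auto simp: pos_coeffs_linear coeff_pCons split: nat.split)

section \<open>Unimodal sequences\<close>

definition unimodal_seq :: "(nat \<Rightarrow> 'a::order) \<Rightarrow> bool" where
  "unimodal_seq c \<longleftrightarrow> (\<exists>j. (\<forall>i<j. c i \<le> c (Suc i)) \<and> (\<forall>i. j \<le> i \<longrightarrow> c (Suc i) \<le> c i))"

lemma unimodal_seqI_no_valley:
  fixes c :: "nat \<Rightarrow> 'a::linorder"
  assumes inc: "\<And>i. i < a \<Longrightarrow> c i \<le> c (Suc i)"
    and dec: "\<And>i. Suc a < i \<Longrightarrow> c (Suc i) \<le> c i"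
    and no_valley: "c (Suc a) < c a \<Longrightarrow> c (Suc (Suc a)) \<le> c (Suc a)"
  shows "unimodal_seq c"
  unfolding unimodal_seq_def
proof (cases "c a \<le> c (Suc a)")
  case up: True
  show "\<exists>j. (\<forall>i<j. c i \<le> c (Suc i)) \<and> (\<forall>i\<ge>j. c (Suc i) \<le> c i)"
  proof (cases "c (Suc a) \<le> c (Suc (Suc a))")
    case True
    show ?thesis
    proof (rule exI[of _ "Suc (Suc a)"], intro conjI allI impI)
      fix i assume "i < Suc (Suc a)"
      thus "c i \<le> c (Suc i)" using inc up True by (cases "i < a") (auto simp: less_Suc_eq)
    next
      fix i assume "Suc (Suc a) \<le> i" thus "c (Suc i) \<le> c i" using dec by simp
    qed
  next
    case False
    show ?thesis
    proof (rule exI[of _ "Suc a"], intro conjI allI impI)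
      fix i assume "i < Suc a"
      thus "c i \<le> c (Suc i)" using inc up by (cases "i = a") auto
    next
      fix i assume "Suc a \<le> i"
      thus "c (Suc i) \<le> c i" using dec False by (cases "i = Suc a") auto
    qed
  qed
next
  case False
  show "\<exists>j. (\<forall>i<j. c i \<le> c (Suc i)) \<and> (\<forall>i\<ge>j. c (Suc i) \<le> c i)"
  proof (rule exI[of _ a], intro conjI allI impI)
    fix i assume "i < a" thus "c i \<le> c (Suc i)" by (rule inc)
  next
    fix i assume "a \<le> i"
    thus "c (Suc i) \<le> c i" using dec no_valley False
      by (cases "i = a \<or> i = Suc a") (auto simp: not_le)
  qed
qed

lemma unimodal_seq_add:
  fixes A B :: "nat \<Rightarrow> 'a::linordered_ab_group_add"
  assumes J: "1 \<le> J"
    and A_inc: "\<And>k. Suc k < J \<Longrightarrow> A k \<le> A (Suc k)"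
    and A_dec: "\<And>k. J < k \<Longrightarrow> A (Suc k) \<le> A k"
    and A_no_valley: "A J < A (J - 1) \<Longrightarrow> A (Suc J) \<le> A J"
    and B_inc: "\<And>k. k < J \<Longrightarrow> B k \<le> B (Suc k)"
    and B_dec: "\<And>k. J \<le> k \<Longrightarrow> B (Suc k) \<le> B k"
  shows "unimodal_seq (\<lambda>k. A k + B k)"
proof -
  obtain J0 where J0: "J = Suc J0" using J by (cases J) auto
  show ?thesis
  proof (rule unimodal_seqI_no_valley[where a = J0])
    show "A i + B i \<le> A (Suc i) + B (Suc i)" if "i < J0" for i
      using that J0 by (intro add_mono A_inc B_inc) auto
    show "A (Suc i) + B (Suc i) \<le> A i + B i" if "Suc J0 < i" for i
      using that J0 by (intro add_mono A_dec B_dec) auto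
    assume valley: "A (Suc J0) + B (Suc J0) < A J0 + B J0"
    have "A (Suc J0) < A J0"
    proof (rule ccontr)
      assume "\<not> A (Suc J0) < A J0"
      hence "A J0 + B J0 \<le> A (Suc J0) + B (Suc J0)"
        using B_inc J0 by (intro add_mono) auto
      thus False using valley by simp
    qed
    hence "A (Suc (Suc J0)) \<le> A (Suc J0)" using A_no_valley J0 by simp
    thus "A (Suc (Suc J0)) + B (Suc (Suc J0)) \<le> A (Suc J0) + B (Suc J0)"
      using B_dec J0 by (intro add_mono) auto
  qed
qed

lemma unimodal_seq_add_shift:
  fixes c :: "nat \<Rightarrow> 'a::linordered_ab_group_add"
  assumes "unimodal_seq c" and nonneg: "\<And>i. 0 \<le> c i"
  shows "unimodal_seq (\<lambda>i. c i + (if i = 0 then 0 else c (i - 1)))" (is "unimodal_seq ?d")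
proof -
  obtain j where inc: "\<And>i. i < j \<Longrightarrow> c i \<le> c (Suc i)" and dec: "\<And>i. j \<le> i \<Longrightarrow> c (Suc i) \<le> c i"
    using assms(1) unfolding unimodal_seq_def by blast
  have dec': "?d (Suc i) \<le> ?d i" if le: "Suc j \<le> i" for i
  proof -
    obtain i0 where i0: "i = Suc i0" using le by (cases i) auto
    show ?thesis using dec[of i] dec[of i0] le unfolding i0 by (simp add: add_mono)
  qed
  show ?thesis
  proof (rule unimodal_seqI_no_valley[where a = j])
    show "?d i \<le> ?d (Suc i)" if "i < j" for i
    proof (cases i)
      case 0 thus ?thesis using nonneg[of 1] by simp
    next
      case (Suc i0)
      thus ?thesis using inc[of i] inc[of i0] that by (simp add: add_mono)
    qed
    show "?d (Suc i) \<le> ?d i" if "Suc j < i" for i using that by (intro dec') simp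
    show "?d (Suc (Suc j)) \<le> ?d (Suc j)" by (rule dec') simp
  qed
qed

lemma unimodal_seq_coeff_mult_linear11:
  fixes p :: "real poly"
  assumes "unimodal_seq (coeff p)" "\<And>i. 0 \<le> coeff p i"
  shows "unimodal_seq (coeff ([:1,1:] * p))"
proof -
  have "coeff ([:1,1:] * p) = (\<lambda>i. coeff p i + (if i = 0 then 0 else coeff p (i - 1)))"
    by (rule ext) (simp add: coeff_pCons split: nat.split)
  thus ?thesis using unimodal_seq_add_shift[OF assms] by simp
qed

section \<open>The factors of the independence polynomial of T*\<close>

definition lin12 :: "real poly" where "lin12 = [:1,2:]"
definition lin11 :: "real poly" where "lin11 = [:1,1:]"
definition var_t :: "real poly" where "var_t = [:0,1:]"

(* (1+t) branch1_factor is the independence polynomial of the branch of T* at v1, and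
   branch_poly m that of a branch at v2 or v3 with m children. *)
definition branch1_factor :: "real poly" where "branch1_factor = [:1,8,20,16,1:]"
definition branch_poly :: "nat \<Rightarrow> real poly" where "branch_poly m = lin12 ^ m + var_t * lin11 ^ m"

lemma coeff_linear_power_binomial:
  "coeff ([:1, b:] ^ N) k = real (N choose k) * b ^ k"
proof (cases "k \<le> N")
  case True thus ?thesis by (simp add: coeff_linear_poly_power)
next
  case False
  hence "coeff ([:1, b:] ^ N) k = 0"
    by (intro coeff_eq_0) (auto intro: le_less_trans[OF degree_power_le] simp: degree_pCons_le)
  thus ?thesis using False by simp
qed

lemma coeff_lin12_power: "coeff (lin12 ^ N) k = real (N choose k) * 2 ^ k"
  unfolding lin12_def by (rule coeff_linear_power_binomial)

lemma coeff_lin11_power: "coeff (lin11 ^ N) k = real (N choose k)"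
  unfolding lin11_def using coeff_linear_power_binomial[of 1] by simp

lemma coeff_var_t_mult: "coeff (var_t * p) k = (if k = 0 then 0 else coeff p (k - 1))"
  unfolding var_t_def by (cases k) auto

lemma coeff_linear_mult: "coeff ([:x, y:] * q) k = x * coeff q k + (if k = 0 then 0 else y * coeff q (k - 1))"
  by (cases k) (simp_all add: algebra_simps)

lemma coeff_branch_poly:
  "coeff (branch_poly m) k = real (m choose k) * 2 ^ k + (if k = 0 then 0 else real (m choose (k - 1)))"
  unfolding branch_poly_def by (simp add: coeff_lin12_power coeff_var_t_mult coeff_lin11_power)

lemma degree_lin12_power: "degree (lin12 ^ N) = N"
  unfolding lin12_def by (simp add: degree_power_eq)

lemma degree_branch_poly: "degree (branch_poly m) = Suc m"
proof -
  have "degree (var_t * lin11 ^ m) = Suc m"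
    unfolding var_t_def lin11_def by (simp add: degree_mult_eq degree_power_eq)
  thus ?thesis unfolding branch_poly_def using degree_lin12_power[of m]
    by (subst degree_add_eq_right) auto
qed

lemma pos_coeffs_lin12: "pos_coeffs lin12"
  unfolding lin12_def by (rule pos_coeffs_linear) auto

lemma pos_coeffs_lin11: "pos_coeffs lin11"
  unfolding lin11_def by (rule pos_coeffs_linear) auto

lemma pf2_lin12: "pf2 lin12"
  unfolding lin12_def by (rule pf2_linear) auto

lemma pf2_lin11: "pf2 lin11"
  unfolding lin11_def by (rule pf2_linear) auto

lemma coeff_branch1_factor:
  "coeff branch1_factor k = (if k = 0 then 1 else if k = 1 then 8 else if k = 2 then 20
     else if k = 3 then 16 else if k = 4 then 1 else 0)"
  unfolding branch1_factor_def
  by (cases k; cases "k - 1"; cases "k - 2"; cases "k - 3"; cases "k - 4") (auto simp: numeral_eq_Suc)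

lemma degree_branch1_factor: "degree branch1_factor = 4"
  unfolding branch1_factor_def by simp

lemma pos_coeffs_linear_lin12_power: "0 < a \<Longrightarrow> 0 < b \<Longrightarrow> pos_coeffs ([:a, b:] * lin12 ^ N)"
  by (rule pos_coeffs_mult[OF pos_coeffs_linear pos_coeffs_power[OF pos_coeffs_lin12]])

lemma pf2_linear_lin12_power: "0 < a \<Longrightarrow> 0 < b \<Longrightarrow> pf2 ([:a, b:] * lin12 ^ N)"
  by (rule pf2_mult[OF pf2_linear pf2_power[OF pf2_lin12]])

lemma degree_linear_lin12_power: "0 < a \<Longrightarrow> 0 < b \<Longrightarrow> degree ([:a, b:] * lin12 ^ N) = Suc N"
  using degree_mult_pos_coeffs[OF pos_coeffs_linear pos_coeffs_power[OF pos_coeffs_lin12], of a b N]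
  by (simp add: degree_lin12_power del: mult_pCons_left)

lemma pos_coeffs_branch1_factor: "pos_coeffs branch1_factor"
  unfolding pos_coeffs_def degree_branch1_factor by (auto simp: coeff_branch1_factor)

lemma pf2_branch1_factor: "pf2 branch1_factor"
  by (rule pf2_of_log_concave)
     (auto simp: coeff_branch1_factor pos_coeffs_branch1_factor)

lemma binomial_Suc_ratio:
  "real (m choose Suc k) * (real k + 1) = real (m choose k) * (real m - real k)"
proof (cases "k \<le> m")
  case True
  have "(m choose Suc k) * Suc k = (m choose k) * (m - k)"
    by (metis binomial_absorption binomial_absorb_comp mult.commute)
  hence "real ((m choose Suc k) * Suc k) = real ((m choose k) * (m - k))" by simp
  thus ?thesis using True by (simp add: of_nat_diff algebra_simps)
next
  case False thus ?thesis by (simp add: binomial_eq_0)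
qed

lemma binomial_pf2:
  "real (m choose x) * real (m choose (x + u + v)) \<le> real (m choose (x + u)) * real (m choose (x + v))"
  using pf2_power[OF pf2_lin11, of m] unfolding pf2_def coeff_lin11_power by auto

lemma pos_coeffs_branch_poly: "pos_coeffs (branch_poly m)"
  unfolding pos_coeffs_def degree_branch_poly
proof (intro allI impI)
  fix k assume k: "k \<le> Suc m"
  show "0 < coeff (branch_poly m) k"
  proof (cases "k \<le> m")
    case True
    thus ?thesis by (simp add: coeff_branch_poly add_pos_nonneg)
  next
    case False
    hence "k = Suc m" using k by simp
    thus ?thesis by (simp add: coeff_branch_poly binomial_eq_0)
  qed
qed

lemma pow2_ge_real: "real n \<le> 2 ^ n"
  using less_exp[of n] by (simp add: less_imp_le)

lemma binomial_log_concavity_gap: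
  fixes j m :: nat
  defines "c1 \<equiv> real (m choose Suc j)" and "c2 \<equiv> real (m choose Suc (Suc j))"
    and "c3 \<equiv> real (m choose Suc (Suc (Suc j)))"
  shows "c1 * c2 \<le> 2 ^ (j + 3) * (c2 * c2 - c1 * c3)"
proof (cases "c2 = 0")
  case True
  moreover have "c3 = 0" using True unfolding c2_def c3_def by (simp add: binomial_eq_0)
  ultimately show ?thesis by simp
next
  case False
  hence jm: "Suc (Suc j) \<le> m" unfolding c2_def by simp
  define e where "e = real m - real j - 1"
  define X :: real where "X = 2 ^ (j + 3)"
  have e0: "0 < e" using jm unfolding e_def by simp
  have r2: "c2 * (real j + 2) = c1 * e"
    using binomial_Suc_ratio[of m "Suc j"] unfolding c2_def c1_def e_def by (simp add: algebra_simps)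
  have r3: "c3 * (real j + 3) = c2 * (e - 1)"
    using binomial_Suc_ratio[of m "Suc (Suc j)"] unfolding c3_def c2_def e_def by (simp add: algebra_simps)
  have "e * (real j + 3) * (X * (c2 * c2 - c1 * c3) - c1 * c2)
      = X * c2 * c2 * e * (real j + 3) - X * (c1 * e) * (c3 * (real j + 3))
        - (c1 * e) * c2 * (real j + 3)" by (simp add: algebra_simps)
  also have "\<dots> = X * c2 * c2 * e * (real j + 3) - X * (c2 * (real j + 2)) * (c2 * (e - 1))
        - (c2 * (real j + 2)) * c2 * (real j + 3)" by (simp only: r2 r3)
  also have "\<dots> = c2 * c2 * (X * (e + real j + 2) - (real j + 2) * (real j + 3))"
    by (simp add: algebra_simps)
  finally have eq: "e * (real j + 3) * (X * (c2 * c2 - c1 * c3) - c1 * c2)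
      = c2 * c2 * (X * (e + real j + 2) - (real j + 2) * (real j + 3))" .
  have "real j + 3 \<le> X" using pow2_ge_real[of "j + 3"] unfolding X_def by simp
  moreover have "real j + 3 \<le> e + real j + 2" using jm unfolding e_def by simp
  ultimately have "(real j + 2) * (real j + 3) \<le> X * (e + real j + 2)"
    by (intro mult_mono) auto
  hence "0 \<le> e * (real j + 3) * (X * (c2 * c2 - c1 * c3) - c1 * c2)" unfolding eq by simp
  moreover have "0 < e * (real j + 3)" using e0 by simp
  ultimately have "0 \<le> X * (c2 * c2 - c1 * c3) - c1 * c2"
    using zero_le_mult_iff[of "e * (real j + 3)"] by smt
  thus ?thesis unfolding X_def by simp
qed

lemma branch_poly_log_concave:
  "coeff (branch_poly m) k * coeff (branch_poly m) (Suc (Suc k)) \<le> coeff (branch_poly m) (Suc k) ^ 2"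
proof (cases k)
  case 0
  have "real (m choose 2) * 2 = real m * (real m - 1)"
    using binomial_Suc_ratio[of m 1] by (simp add: numeral_2_eq_2)
  thus ?thesis using 0 by (simp add: coeff_branch_poly numeral_2_eq_2 algebra_simps power2_eq_square)
next
  case (Suc j)
  define c0 c1 c2 c3 where "c0 = real (m choose j)" and "c1 = real (m choose Suc j)"
    and "c2 = real (m choose Suc (Suc j))" and "c3 = real (m choose Suc (Suc (Suc j)))"
  define X :: real where "X = 2 ^ Suc j"
  have gap: "X * (4 * X * (c2 * c2 - c1 * c3) - c1 * c2) \<ge> 0"
    using binomial_log_concavity_gap[of m j] unfolding c1_def c2_def c3_def X_def
    by (simp add: numeral_eq_Suc)
  have "c0 * c3 \<le> c1 * c2" using binomial_pf2[of m j 1 2] unfolding c0_def c1_def c2_def c3_def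
    by (simp add: numeral_2_eq_2)
  moreover have "c0 * c2 \<le> c1 * c1" using binomial_pf2[of m j 1 1] unfolding c0_def c1_def c2_def by simp
  moreover have "(c2 * (2*X) + c1) ^ 2 - (c1 * X + c0) * (c3 * (4*X) + c2)
      = X * (4 * X * (c2 * c2 - c1 * c3) - c1 * c2) + 4 * X * (c1 * c2 - c0 * c3) + (c1 * c1 - c0 * c2)"
    by (simp add: algebra_simps power2_eq_square)
  ultimately have "(c1 * X + c0) * (c3 * (4*X) + c2) \<le> (c2 * (2*X) + c1) ^ 2"
    using gap by (smt (verit) X_def mult_nonneg_nonneg zero_le_power)
  thus ?thesis unfolding Suc c0_def c1_def c2_def c3_def X_def by (simp add: coeff_branch_poly algebra_simps)
qed

lemma pf2_branch_poly: "pf2 (branch_poly m)"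
  by (rule pf2_of_log_concave)
     (use pos_coeffs_branch_poly branch_poly_log_concave in \<open>auto simp: pos_coeffs_nonneg power2_eq_square\<close>)

lemma branch_poly_upper_consecutive:
  "coeff (branch_poly m) (Suc k) * coeff (lin12 ^ m * lin11) k
     \<le> coeff (branch_poly m) k * coeff (lin12 ^ m * lin11) (Suc k)"
proof -
  define c c' cm where "c = real (m choose k)" and "c' = real (m choose Suc k)"
    and "cm = (if k = 0 then 0 else real (m choose (k - 1)))"
  define X :: real where "X = 2 ^ k"
  have X1: "1 \<le> X" unfolding X_def by simp
  have cn: "0 \<le> c" "0 \<le> c'" "0 \<le> cm" unfolding c_def c'_def cm_def by auto
  have lc: "cm * c' \<le> c * c"
  proof (cases k)
    case (Suc k0)
    show ?thesis using binomial_pf2[of m k0 1 1] unfolding cm_def c_def c'_def Suc by (simp add: mult.commute)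
  qed (simp add: cm_def)
  have coeff_upper: "coeff (lin12 ^ m * lin11) i
      = real (m choose i) * 2 ^ i + (if i = 0 then 0 else real (m choose (i - 1)) * 2 ^ (i - 1))" for i
    unfolding mult.commute[of "lin12 ^ m"] lin11_def coeff_linear_mult by (simp add: coeff_lin12_power)
  have "(c * X + cm) * (2 * c' + c) - (2 * X * c' + c) * (c + cm / 2)
        = (X - 1) * (c * c - cm * c') + c' * cm + c * cm / 2" by (simp add: algebra_simps)
  also have "\<dots> \<ge> 0" using X1 lc cn by (intro add_nonneg_nonneg mult_nonneg_nonneg) auto
  finally have "X * ((2 * X * c' + c) * (c + cm / 2)) \<le> X * ((c * X + cm) * (2 * c' + c))"
    using X1 by (intro mult_left_mono) auto
  moreover have "coeff (branch_poly m) (Suc k) = 2 * X * c' + c" "coeff (branch_poly m) k = c * X + cm"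
    unfolding c_def c'_def cm_def X_def by (simp_all add: coeff_branch_poly)
  moreover have "coeff (lin12 ^ m * lin11) k = X * (c + cm / 2)"
    "coeff (lin12 ^ m * lin11) (Suc k) = X * (2 * c' + c)"
    unfolding coeff_upper c_def c'_def cm_def X_def by (cases k; simp add: algebra_simps)+
  ultimately show ?thesis by (simp add: algebra_simps)
qed

lemma lr_le_branch_poly_upper: "lr_le (branch_poly m) (lin12 ^ m * lin11)"
proof (rule lr_le_of_consecutive[where lo = 0])
  have pos: "pos_coeffs (lin12 ^ m * lin11)"
    by (intro pos_coeffs_mult pos_coeffs_power pos_coeffs_lin12 pos_coeffs_lin11)
  show "0 < coeff (lin12 ^ m * lin11) k" if "0 \<le> k" "k \<le> degree (lin12 ^ m * lin11)" for k
    using pos that unfolding pos_coeffs_def by auto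
  show "degree (branch_poly m) \<le> degree (lin12 ^ m * lin11)"
    using degree_mult_pos_coeffs[OF pos_coeffs_power[OF pos_coeffs_lin12] pos_coeffs_lin11]
    by (simp add: degree_branch_poly degree_lin12_power lin11_def)
qed (use pos_coeffs_branch_poly pos_coeffs_lin12 pos_coeffs_lin11 branch_poly_upper_consecutive in
      \<open>auto intro: pos_coeffs_nonneg pos_coeffs_mult pos_coeffs_power\<close>)

lemma pow2_bounds:
  fixes k :: nat
  shows "4 * k \<le> 2 ^ (k + 1) + 4" "7 * k \<le> 2 ^ (k + 1) + 9" "3 * k * k \<le> 2 ^ (k + 1) + 12 * k + 7"
proof -
  show "4 * k \<le> 2 ^ (k + 1) + 4" by (induction k) (auto simp: algebra_simps)
  show "7 * k \<le> 2 ^ (k + 1) + 9"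
  proof (induction k)
    case (Suc k)
    show ?case
    proof (cases "k \<le> 2")
      case True thus ?thesis by (cases k; cases "k - 1") auto
    next
      case False
      hence "(8::nat) \<le> 2 ^ k" using power_increasing[of 3 k "2::nat"] by simp
      thus ?thesis using Suc by simp
    qed
  qed simp
  have six: "6 * i \<le> 2 ^ (i + 1) + 9" for i :: nat
  proof (induction i)
    case (Suc i)
    show ?case
    proof (cases "i \<le> 1")
      case True thus ?thesis by (cases i) auto
    next
      case False
      hence "(4::nat) \<le> 2 ^ i" using power_increasing[of 2 i "2::nat"] by simp
      thus ?thesis using Suc by simp
    qed
  qed simp
  show "3 * k * k \<le> 2 ^ (k + 1) + 12 * k + 7"
  proof (induction k)
    case (Suc k)
    have "3 * Suc k * Suc k = 3 * k * k + 6 * k + 3" by (simp add: algebra_simps)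
    also have "\<dots> \<le> 2 ^ (Suc k + 1) + 12 * Suc k + 7" using Suc six[of k] by simp
    finally show ?case .
  qed simp
qed

lemma lower_cubic_nonneg:
  fixes kk r X :: real
  assumes k1: "1 \<le> kk" and r0: "0 \<le> r"
    and b1: "4 * kk \<le> 2 * X + 4" and b2: "7 * kk \<le> 2 * X + 9"
    and b3: "3 * kk * kk \<le> 2 * X + 12 * kk + 7"
  shows "0 \<le> (2*X - 4*kk + 4) * r^3 + (2*X*(kk+1) - 7*kk^2 + 13*kk + 4) * r^2
             + (2*X*kk - 3*kk^3 + 12*kk^2 + 7*kk) * r + 3*kk^2*(kk+1)"
proof -
  have "(7*kk - 9) * (kk+1) \<le> 2*X*(kk+1)" using b2 k1 by (intro mult_right_mono) auto
  hence c2: "0 \<le> 2*X*(kk+1) - 7*kk^2 + 13*kk + 4" using k1 by (simp add: algebra_simps power2_eq_square)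
  have "0 \<le> kk * (2*X - 3*kk*kk + 12*kk + 7)" using b3 k1 by simp
  hence c1: "0 \<le> 2*X*kk - 3*kk^3 + 12*kk^2 + 7*kk" by (simp add: algebra_simps power2_eq_square power3_eq_cube)
  have "0 \<le> (2*X - 4*kk + 4) * r^3" using b1 r0 by simp
  moreover have "0 \<le> (2*X*(kk+1) - 7*kk^2 + 13*kk + 4) * r^2" using c2 r0 by simp
  moreover have "0 \<le> (2*X*kk - 3*kk^3 + 12*kk^2 + 7*kk) * r" using c1 r0 by simp
  moreover have "0 \<le> 3*kk^2*(kk+1)" using k1 by simp
  ultimately show ?thesis by linarith
qed

(* Clearing the binomial ratios turns the consecutive-coefficient gap of the lower bound
   for branch_poly into a1^2 times a cubic in r with nonnegative coefficients. *)
lemma lower_gap_identity: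
  fixes a0 a1 a2 a3 X kk r :: real
  assumes rel2: "a2 * kk = a1 * r" and rel3: "a3 * (kk + 1) = a2 * (r - 1)"
    and rel0: "a1 * (kk - 1) = a0 * (r + 1)"
  shows "(X*(a2*a2 - a1*a3) + 2*a2*a2 + 1/2*a1*a2 + 3/2*a1*a1 - 4*a1*a3 - 4*a0*a3 - 3*a0*a2)
           * (2 * kk^2 * (kk+1) * (r+1))
         = a1 * a1 * ((2*X - 4*kk + 4) * r^3 + (2*X*(kk+1) - 7*kk^2 + 13*kk + 4) * r^2
             + (2*X*kk - 3*kk^3 + 12*kk^2 + 7*kk) * r + 3*kk^2*(kk+1))"
  using assms by algebra

lemma lower_gap_nonneg:
  fixes p0 k1 :: nat
  defines "a0 \<equiv> (if k1 = 0 then 0 else real (p0 choose (k1 - 1)))" and "a1 \<equiv> real (p0 choose k1)"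
    and "a2 \<equiv> real (p0 choose Suc k1)" and "a3 \<equiv> real (p0 choose Suc (Suc k1))"
    and "X \<equiv> (2::real) ^ Suc k1"
  shows "0 \<le> X*(a2*a2 - a1*a3) + 2*a2*a2 + 1/2*a1*a2 + 3/2*a1*a1 - 4*a1*a3 - 4*a0*a3 - 3*a0*a2"
    (is "0 \<le> ?T")
proof (cases "k1 \<le> p0")
  case False
  hence "a1 = 0" "a2 = 0" "a3 = 0" unfolding a1_def a2_def a3_def by auto
  thus ?thesis by simp
next
  case True
  define kk r where "kk = real (Suc k1)" and "r = real p0 - real k1"
  have kk1: "1 \<le> kk" and r0: "0 \<le> r" using True unfolding kk_def r_def by auto
  have rel2: "a2 * kk = a1 * r"
    using binomial_Suc_ratio[of p0 k1] unfolding a2_def a1_def r_def kk_def by (simp add: add.commute)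
  have rel3: "a3 * (kk + 1) = a2 * (r - 1)"
    using binomial_Suc_ratio[of p0 "Suc k1"] unfolding a3_def a2_def r_def kk_def by (simp add: algebra_simps)
  have rel0: "a1 * (kk - 1) = a0 * (r + 1)"
  proof (cases k1)
    case (Suc k2)
    show ?thesis using binomial_Suc_ratio[of p0 k2] unfolding a1_def a0_def r_def kk_def Suc
      by (simp add: algebra_simps)
  qed (simp add: a0_def kk_def)
  have bounds: "4 * kk \<le> 2 * X + 4" "7 * kk \<le> 2 * X + 9" "3 * kk * kk \<le> 2 * X + 12 * kk + 7"
  proof -
    have "real (4 * Suc k1) \<le> real (2 ^ (Suc k1 + 1) + 4)"
      "real (7 * Suc k1) \<le> real (2 ^ (Suc k1 + 1) + 9)"
      "real (3 * Suc k1 * Suc k1) \<le> real (2 ^ (Suc k1 + 1) + 12 * Suc k1 + 7)"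
      using pow2_bounds[of "Suc k1"] by (simp_all only: of_nat_le_iff)
    thus "4 * kk \<le> 2 * X + 4" "7 * kk \<le> 2 * X + 9" "3 * kk * kk \<le> 2 * X + 12 * kk + 7"
      unfolding kk_def X_def by (simp_all add: algebra_simps)
  qed
  have "0 \<le> a1 * a1 * ((2*X - 4*kk + 4) * r^3 + (2*X*(kk+1) - 7*kk^2 + 13*kk + 4) * r^2
             + (2*X*kk - 3*kk^3 + 12*kk^2 + 7*kk) * r + 3*kk^2*(kk+1))"
    using lower_cubic_nonneg[OF kk1 r0 bounds] by simp
  hence "0 \<le> ?T * (2 * kk^2 * (kk+1) * (r+1))"
    unfolding lower_gap_identity[OF rel2 rel3 rel0] .
  moreover have "0 < 2 * kk^2 * (kk+1) * (r+1)" using kk1 r0 by simp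
  ultimately show ?thesis by (simp add: zero_le_mult_iff)
qed

lemma branch_poly_lower_consecutive:
  "coeff ([:2,3:] * lin12 ^ p0) (Suc k) * coeff (branch_poly (Suc p0)) k
     \<le> coeff ([:2,3:] * lin12 ^ p0) k * coeff (branch_poly (Suc p0)) (Suc k)"
proof (cases k)
  case 0
  thus ?thesis by (simp add: coeff_linear_mult coeff_branch_poly coeff_lin12_power algebra_simps)
next
  case (Suc k1)
  let ?f = "[:2,3:] * lin12 ^ p0"
  define a0 a1 a2 a3 where "a0 = (if k1 = 0 then 0 else real (p0 choose (k1 - 1)))"
    and "a1 = real (p0 choose k1)" and "a2 = real (p0 choose Suc k1)"
    and "a3 = real (p0 choose Suc (Suc k1))"
  define X :: real where "X = 2 ^ k"
  have cf: "coeff ?f j = 2 * (real (p0 choose j) * 2 ^ j)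
      + (if j = 0 then 0 else 3 * (real (p0 choose (j - 1)) * 2 ^ (j - 1)))" for j
    unfolding coeff_linear_mult by (simp add: coeff_lin12_power)
  have fk: "coeff ?f k = X * (2*a2 + 3/2*a1)"
    unfolding cf Suc a1_def a2_def X_def by (simp add: algebra_simps)
  have fk1: "coeff ?f (Suc k) = X * (4*a3 + 3*a2)"
    unfolding cf Suc a3_def a2_def X_def by (simp add: algebra_simps)
  have uk: "coeff (branch_poly (Suc p0)) k = (a1 + a2) * X + (a0 + a1)"
  proof (cases k1)
    case 0 thus ?thesis unfolding Suc a0_def a1_def a2_def X_def by (simp add: coeff_branch_poly)
  next
    case (Suc k2) thus ?thesis unfolding \<open>k = Suc k1\<close> a0_def a1_def a2_def X_def
      by (simp add: coeff_branch_poly algebra_simps)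
  qed
  have uk1: "coeff (branch_poly (Suc p0)) (Suc k) = (a2 + a3) * (2*X) + (a1 + a2)"
    unfolding Suc a1_def a2_def a3_def X_def by (simp add: coeff_branch_poly algebra_simps)
  have "coeff ?f k * coeff (branch_poly (Suc p0)) (Suc k) - coeff ?f (Suc k) * coeff (branch_poly (Suc p0)) k
      = X * (X*(a2*a2 - a1*a3) + 2*a2*a2 + 1/2*a1*a2 + 3/2*a1*a1 - 4*a1*a3 - 4*a0*a3 - 3*a0*a2)"
    unfolding fk fk1 uk uk1 by (simp add: algebra_simps)
  moreover have "0 \<le> X * (X*(a2*a2 - a1*a3) + 2*a2*a2 + 1/2*a1*a2 + 3/2*a1*a1 - 4*a1*a3 - 4*a0*a3 - 3*a0*a2)"
    using lower_gap_nonneg[of k1 p0] unfolding a0_def a1_def a2_def a3_def X_def Suc by simp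
  ultimately show ?thesis by simp
qed

lemma lr_le_branch_poly_lower: "lr_le ([:2,3:] * lin12 ^ p0) (branch_poly (Suc p0))"
proof (rule lr_le_of_consecutive[where lo = 0])
  have pos: "pos_coeffs ([:2,3:] * lin12 ^ p0)"
    by (intro pos_coeffs_mult pos_coeffs_power pos_coeffs_lin12 pos_coeffs_linear) auto
  show "0 \<le> coeff ([:2,3:] * lin12 ^ p0) i" for i using pos by (rule pos_coeffs_nonneg)
  show "degree ([:2,3:] * lin12 ^ p0) \<le> degree (branch_poly (Suc p0))"
    using degree_mult_pos_coeffs[OF pos_coeffs_linear pos_coeffs_power[OF pos_coeffs_lin12], of 2 3 p0]
    by (simp add: degree_branch_poly degree_lin12_power)
qed (use pos_coeffs_branch_poly branch_poly_lower_consecutive in \<open>auto intro: pos_coeffs_nonneg simp: pos_coeffs_def\<close>)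

lemma lin12_power_increasing:
  assumes "3 * k + 1 \<le> 2 * N"
  shows "coeff (lin12 ^ N) k \<le> coeff (lin12 ^ N) (Suc k)"
proof -
  have "real (3 * k + 1) \<le> real (2 * N)" using assms by (simp only: of_nat_le_iff)
  hence "real k + 1 \<le> 2 * (real N - real k)" by simp
  hence "real (N choose k) * (real k + 1) \<le> 2 * (real (N choose k) * (real N - real k))"
    by (simp add: mult_left_mono)
  also have "\<dots> = 2 * real (N choose Suc k) * (real k + 1)"
    by (simp only: binomial_Suc_ratio[symmetric] mult.assoc)
  finally have "real (N choose k) \<le> 2 * real (N choose Suc k)"
    by (simp add: mult_le_cancel_right pos_add_strict)
  thus ?thesis by (simp add: coeff_lin12_power)
qed

lemma lin12_power_decreasing:
  assumes "2 * N \<le> 3 * k + 1"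
  shows "coeff (lin12 ^ N) (Suc k) \<le> coeff (lin12 ^ N) k"
proof -
  have "real (2 * N) \<le> real (3 * k + 1)" using assms by (simp only: of_nat_le_iff)
  hence "2 * (real N - real k) \<le> real k + 1" by simp
  hence "real (N choose k) * (2 * (real N - real k)) \<le> real (N choose k) * (real k + 1)"
    by (intro mult_left_mono) auto
  moreover have "real (N choose k) * (2 * (real N - real k)) = 2 * real (N choose Suc k) * (real k + 1)"
    by (simp only: mult.left_commute[of _ 2] binomial_Suc_ratio[symmetric] mult.assoc)
  ultimately have "2 * real (N choose Suc k) \<le> real (N choose k)"
    by (simp add: mult_le_cancel_right pos_add_strict)
  thus ?thesis by (simp add: coeff_lin12_power)
qed

lemma lin13_lin12_power_diff:
  assumes "1 \<le> k"
  shows "(real k + 1) * (real N - real k + 1) * (coeff ([:1,3:] * lin12 ^ N) k - coeff ([:1,3:] * lin12 ^ N) (Suc k))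
    = 2 ^ (k - 1) * real (N choose k) * (3 * real k * (real k + 1) - 4 * (real N + 1) * (real N - real k + 1))"
proof -
  obtain k0 where k0: "k = Suc k0" using assms by (cases k) auto
  define c cp cm where "c = real (N choose k)" and "cp = real (N choose Suc k)" and "cm = real (N choose k0)"
  define X :: real where "X = 2 ^ k0"
  have e1: "coeff ([:1,3:] * lin12 ^ N) k = X * (2*c + 3*cm)"
    unfolding coeff_linear_mult k0 c_def cm_def X_def by (simp add: coeff_lin12_power algebra_simps)
  have e2: "coeff ([:1,3:] * lin12 ^ N) (Suc k) = X * (4*cp + 6*c)"
    unfolding coeff_linear_mult k0 c_def cp_def X_def by (simp add: coeff_lin12_power algebra_simps)
  have r1: "cp * (real k + 1) = c * (real N - real k)" unfolding cp_def c_def by (rule binomial_Suc_ratio)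
  have r2: "c * real k = cm * (real N - real k + 1)"
    using binomial_Suc_ratio[of N k0] unfolding c_def cm_def k0 by (simp add: algebra_simps)
  have "(real k + 1) * (real N - real k + 1) * (coeff ([:1,3:] * lin12 ^ N) k - coeff ([:1,3:] * lin12 ^ N) (Suc k))
      = (real k + 1) * (real N - real k + 1) * (X * (2*c + 3*cm) - X * (4*cp + 6*c))"
    by (simp only: e1 e2)
  also have "\<dots> = X * (3 * (real k + 1) * (cm * (real N - real k + 1)) - 4 * (real N - real k + 1) * (cp * (real k + 1))
          - 4 * c * (real k + 1) * (real N - real k + 1))"
    by (simp add: algebra_simps)
  also have "\<dots> = X * (3 * (real k + 1) * (c * real k) - 4 * (real N - real k + 1) * (c * (real N - real k))
          - 4 * c * (real k + 1) * (real N - real k + 1))"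
    unfolding r1 r2 by simp
  also have "\<dots> = X * c * (3 * real k * (real k + 1) - 4 * (real N + 1) * (real N - real k + 1))"
    by (simp add: algebra_simps)
  finally show ?thesis unfolding X_def c_def k0 by simp
qed

lemma lin13_lin12_power_step:
  assumes "1 \<le> k" "k \<le> N"
  shows "coeff ([:1,3:] * lin12 ^ N) k \<le> coeff ([:1,3:] * lin12 ^ N) (Suc k)
           \<longleftrightarrow> 3 * k * (k + 1) \<le> 4 * (N + 1) * (N - k + 1)" (is "?inc \<longleftrightarrow> ?inc_nat")
    and "coeff ([:1,3:] * lin12 ^ N) (Suc k) \<le> coeff ([:1,3:] * lin12 ^ N) k
           \<longleftrightarrow> 4 * (N + 1) * (N - k + 1) \<le> 3 * k * (k + 1)" (is "?dec \<longleftrightarrow> ?dec_nat")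
proof -
  let ?D = "coeff ([:1,3:] * lin12 ^ N) k - coeff ([:1,3:] * lin12 ^ N) (Suc k)"
  let ?Q = "3 * real k * (real k + 1) - 4 * (real N + 1) * (real N - real k + 1)"
  define r where "r = 2 ^ (k - 1) * real (N choose k) / ((real k + 1) * (real N - real k + 1))"
  have pos: "0 < (real k + 1) * (real N - real k + 1)" using assms(2) by simp
  have r_pos: "0 < r" unfolding r_def using assms by simp
  have cancel: "D = b / a * Q" if "a * D = b * Q" "0 < a" for a b D Q :: real
    using that by (simp add: field_simps)
  have D_eq: "?D = r * ?Q"
    unfolding r_def by (rule cancel[OF lin13_lin12_power_diff[OF assms(1)] pos])
  have "real (N - k + 1) = real N - real k + 1" using assms(2) by (simp add: of_nat_diff)
  hence cast: "real (4 * (N + 1) * (N - k + 1)) = 4 * (real N + 1) * (real N - real k + 1)"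
    "real (3 * k * (k + 1)) = 3 * real k * (real k + 1)"
    by (simp_all only: of_nat_mult of_nat_add of_nat_numeral of_nat_1)
  have "?inc \<longleftrightarrow> ?D \<le> 0" by (simp only: diff_le_0_iff_le)
  also have "\<dots> \<longleftrightarrow> ?Q \<le> 0" unfolding D_eq using r_pos by (simp add: mult_le_0_iff)
  also have "\<dots> \<longleftrightarrow> ?inc_nat" by (simp only: of_nat_le_iff[symmetric, where 'a = real] cast) simp
  finally show "?inc \<longleftrightarrow> ?inc_nat" .
  have "?dec \<longleftrightarrow> 0 \<le> ?D" by (simp only: diff_ge_0_iff_ge)
  also have "\<dots> \<longleftrightarrow> 0 \<le> ?Q" unfolding D_eq using r_pos by (simp add: zero_le_mult_iff)
  also have "\<dots> \<longleftrightarrow> ?dec_nat" by (simp only: of_nat_le_iff[symmetric, where 'a = real] cast) simp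
  finally show "?dec \<longleftrightarrow> ?dec_nat" .
qed

lemma lr_le_of_coeffs7:
  fixes a0 a1 a2 a3 a4 a5 a6 b0 b1 b2 b3 b4 b5 b6 :: real
  assumes "0 \<le> a0" "0 \<le> a1" "0 \<le> a2" "0 \<le> a3" "0 \<le> a4" "0 \<le> a5" "0 \<le> a6"
    "0 < b0" "0 < b1" "0 < b2" "0 < b3" "0 < b4" "0 < b5" "0 < b6"
    "a1 * b0 \<le> a0 * b1" "a2 * b1 \<le> a1 * b2" "a3 * b2 \<le> a2 * b3" "a4 * b3 \<le> a3 * b4"
    "a5 * b4 \<le> a4 * b5" "a6 * b5 \<le> a5 * b6"
  shows "lr_le [:a0,a1,a2,a3,a4,a5,a6:] [:b0,b1,b2,b3,b4,b5,b6:]"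
proof (rule lr_le_of_consecutive[where lo = 0])
  let ?p = "[:a0,a1,a2,a3,a4,a5,a6:]" and ?q = "[:b0,b1,b2,b3,b4,b5,b6:]"
  have small: "k < 7 \<Longrightarrow> k = 0 \<or> k = 1 \<or> k = 2 \<or> k = 3 \<or> k = 4 \<or> k = 5 \<or> k = 6" for k :: nat
    by auto
  have dq: "degree ?q = 6" using assms by simp
  have dp: "degree ?p \<le> 6" by (simp add: degree_pCons_le)
  show "0 \<le> coeff ?p i" for i
    using small[of i] assms dp by (cases "i < 7") (auto simp: numeral_eq_Suc coeff_eq_0)
  show "0 \<le> coeff ?q i" for i
    using small[of i] assms dq by (cases "i < 7") (auto simp: numeral_eq_Suc coeff_eq_0)
  show "0 < coeff ?q k" if "0 \<le> k" "k \<le> degree ?q" for k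
    using that small[of k] assms unfolding dq by (auto simp: numeral_eq_Suc)
  show "degree ?p \<le> degree ?q" using dp dq by simp
  show "coeff ?p (Suc k) * coeff ?q k \<le> coeff ?p k * coeff ?q (Suc k)" for k
    using small[of k] assms dp by (cases "k < 7") (auto simp: numeral_eq_Suc coeff_eq_0)
qed simp

lemma lr_le_lin12_power5: "lr_le (lin12 ^ 5) (branch1_factor * [:2,3:] ^ 2)"
proof -
  have "lin12 ^ 5 = [:1,10,40,80,80,32,0:]" unfolding lin12_def by (simp add: numeral_eq_Suc field_simps)
  moreover have "branch1_factor * [:2,3:] ^ 2 = [:4,44,185,376,376,156,9:]"
    unfolding branch1_factor_def by (simp add: power2_eq_square)
  moreover have "lr_le [:1,10,40,80,80,32,0:] [:4,44,185,376,376,156,9:]" by (rule lr_le_of_coeffs7) auto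
  ultimately show ?thesis by simp
qed

lemma lr_le_lin12_power6: "lr_le (branch1_factor * lin11 ^ 2) (lin12 ^ 6)"
proof -
  have "branch1_factor * lin11 ^ 2 = [:1,10,37,64,53,18,1:]"
    unfolding branch1_factor_def lin11_def by (simp add: power2_eq_square)
  moreover have "lin12 ^ 6 = [:1,12,60,160,240,192,64:]" unfolding lin12_def by (simp add: numeral_eq_Suc field_simps)
  moreover have "lr_le [:1,10,37,64,53,18,1:] [:1,12,60,160,240,192,64:]" by (rule lr_le_of_coeffs7) auto
  ultimately show ?thesis by simp
qed

lemma lr_le_lin12_power_lower_product:
  "lr_le (lin12 ^ (m0 + n0 + 5)) (branch1_factor * ([:2,3:] * lin12 ^ m0) * ([:2,3:] * lin12 ^ n0))"
proof -
  have "lin12 ^ 5 * lin12 ^ (m0 + n0) = lin12 ^ (m0 + n0 + 5)"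
    by (simp only: power_add[symmetric] add.commute)
  moreover have "branch1_factor * [:2,3:] ^ 2 * lin12 ^ (m0 + n0)
      = branch1_factor * ([:2,3:] * lin12 ^ m0) * ([:2,3:] * lin12 ^ n0)"
    by (simp only: power_add power2_eq_square mult_ac)
  ultimately show ?thesis
    using lr_le_mult_pf2[OF lr_le_lin12_power5 pf2_power[OF pf2_lin12, of "m0 + n0"]] by (simp only:)
qed

lemma lr_le_upper_product_lin12_power:
  "lr_le (branch1_factor * (lin12 ^ m * lin11) * (lin12 ^ n * lin11)) (lin12 ^ (m + n + 6))"
proof -
  have "branch1_factor * lin11 ^ 2 * lin12 ^ (m + n) = branch1_factor * (lin12 ^ m * lin11) * (lin12 ^ n * lin11)"
    by (simp only: power_add power2_eq_square mult_ac)
  moreover have "lin12 ^ 6 * lin12 ^ (m + n) = lin12 ^ (m + n + 6)"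
    by (simp only: power_add[symmetric] add.commute)
  ultimately show ?thesis
    using lr_le_mult_pf2[OF lr_le_lin12_power6 pf2_power[OF pf2_lin12, of "m + n"]] by (simp only:)
qed

lemma mode_index_facts:
  fixes s :: nat
  assumes "2 \<le> s"
  defines "J \<equiv> (2 * s + 11) div 3"
  shows "5 \<le> J" "J \<le> s + 3" "3 * J \<le> 2 * s + 11" "2 * s + 9 \<le> 3 * J"
    "3 * (J - 2) * (J - 2 + 1) \<le> 4 * (s + 2 + 1) * (s + 2 - (J - 2) + 1)"
    "4 * (s + 2 + 1) * (s + 2 - (J - 1) + 1) \<le> 3 * (J - 1) * (J - 1 + 1)"
proof -
  define q r where "q = s div 3" and "r = s mod 3"
  have s: "s = 3 * q + r" and "r < 3" unfolding q_def r_def by simp_all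
  then consider "r = 0" | "r = 1" | "r = 2" by linarith
  hence "5 \<le> J \<and> J \<le> s + 3 \<and> 3 * J \<le> 2 * s + 11 \<and> 2 * s + 9 \<le> 3 * J \<and>
    3 * (J - 2) * (J - 2 + 1) \<le> 4 * (s + 2 + 1) * (s + 2 - (J - 2) + 1) \<and>
    4 * (s + 2 + 1) * (s + 2 - (J - 1) + 1) \<le> 3 * (J - 1) * (J - 1 + 1)"
  proof cases
    case 1
    hence "1 \<le> q" "J = 2 * q + 3" using assms(1) s unfolding J_def by simp_all
    moreover have "2*q+3-2 = 2*q+1" "2*q+3-1 = 2*q+2" "3*q+2-(2*q+1) = q+1" "3*q+2-(2*q+2) = q" by auto
    ultimately show ?thesis using 1 s by (simp add: algebra_simps)
  next
    case 2
    hence "J = 2 * q + 4" using s unfolding J_def by simp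
    moreover have "2*q+4-2 = 2*q+2" "2*q+4-1 = 2*q+3" "3*q+1+2-(2*q+2) = q+1" "3*q+1+2-(2*q+3) = q" by auto
    ultimately show ?thesis using 2 s assms(1) by (simp add: algebra_simps)
  next
    case 3
    hence "J = 2 * q + 5" using s unfolding J_def by simp
    moreover have "2*q+5-2 = 2*q+3" "2*q+5-1 = 2*q+4" "3*q+2+2-(2*q+3) = q+1" "3*q+2+2-(2*q+4) = q" by auto
    ultimately show ?thesis using 3 s assms(1) by (simp add: algebra_simps)
  qed
  thus "5 \<le> J" "J \<le> s + 3" "3 * J \<le> 2 * s + 11" "2 * s + 9 \<le> 3 * J"
    "3 * (J - 2) * (J - 2 + 1) \<le> 4 * (s + 2 + 1) * (s + 2 - (J - 2) + 1)"
    "4 * (s + 2 + 1) * (s + 2 - (J - 1) + 1) \<le> 3 * (J - 1) * (J - 1 + 1)"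
    by (blast+)
qed

lemma lr_le_increasing_pos:
  assumes "lr_le p q" "pos_coeffs p" "k \<le> degree p" "coeff p k \<le> coeff p (Suc k)"
  shows "coeff q k \<le> coeff q (Suc k)"
  using assms by (intro lr_le_increasing_step[OF assms(1)]) (auto simp: pos_coeffs_def)

lemma lr_le_decreasing_pos:
  assumes "lr_le p q" "pos_coeffs q" "k \<le> degree q" "coeff q (Suc k) \<le> coeff q k"
  shows "coeff p (Suc k) \<le> coeff p k"
  using assms by (intro lr_le_decreasing_step[OF assms(1)]) (auto simp: pos_coeffs_def)

(* Up to the common factor 1 + t, these count the independent sets of T* avoiding resp.
   containing the root. *)
definition without_root :: "nat \<Rightarrow> nat \<Rightarrow> real poly" where
  "without_root m n = branch1_factor * branch_poly m * branch_poly n"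

definition with_root :: "nat \<Rightarrow> nat \<Rightarrow> real poly" where
  "with_root m n = var_t * ([:1,3:] * lin12 ^ (m + n + 2))"

lemma pos_coeffs_without_root: "pos_coeffs (without_root m n)"
  unfolding without_root_def by (intro pos_coeffs_mult pos_coeffs_branch1_factor pos_coeffs_branch_poly)

lemma pf2_without_root: "pf2 (without_root m n)"
  unfolding without_root_def by (intro pf2_mult pf2_branch1_factor pf2_branch_poly)

lemma degree_without_root: "degree (without_root m n) = m + n + 6"
  unfolding without_root_def
  by (simp add: degree_mult_pos_coeffs pos_coeffs_mult pos_coeffs_branch1_factor pos_coeffs_branch_poly
      degree_branch1_factor degree_branch_poly)

lemma without_root_increasing:
  assumes "1 \<le> m" "1 \<le> n" and k: "Suc k < (2 * (m + n) + 11) div 3"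
  shows "coeff (without_root m n) k \<le> coeff (without_root m n) (Suc k)"
proof -
  obtain m0 n0 where m0: "m = Suc m0" and n0: "n = Suc n0" using assms(1,2) by (cases m; cases n) auto
  define s where "s = m + n"
  have s2: "2 \<le> s" unfolding s_def using assms(1,2) by simp
  note J = mode_index_facts[OF s2, folded s_def]
  define lower where "lower i = [:2,3:] * lin12 ^ i" for i
  have pos_lower: "pos_coeffs (lower i)" and pf2_lower: "pf2 (lower i)" and deg_lower: "degree (lower i) = Suc i"
    for i unfolding lower_def
    by (rule pos_coeffs_linear_lin12_power pf2_linear_lin12_power degree_linear_lin12_power; simp)+
  define L1 L2 where "L1 = branch1_factor * lower m0 * lower n0" and "L2 = branch1_factor * branch_poly m * lower n0"
  have "s + 3 = m0 + n0 + 5" unfolding s_def m0 n0 by simp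
  hence lr01: "lr_le (lin12 ^ (s + 3)) L1"
    unfolding L1_def lower_def by (simp only: lr_le_lin12_power_lower_product)
  have lr12: "lr_le L1 L2"
    using lr_le_mult_pf2[OF lr_le_branch_poly_lower[of m0] pf2_mult[OF pf2_branch1_factor pf2_lower[of n0]]]
    unfolding L1_def L2_def lower_def m0 by (simp only: mult_ac)
  have lr2A: "lr_le L2 (without_root m n)"
    using lr_le_mult_pf2[OF lr_le_branch_poly_lower[of n0] pf2_mult[OF pf2_branch1_factor pf2_branch_poly[of m]]]
    unfolding L2_def without_root_def lower_def n0 by (simp only: mult_ac)
  have pos: "pos_coeffs L1" "pos_coeffs L2"
    unfolding L1_def L2_def
    by (simp_all add: pos_coeffs_mult pos_coeffs_branch1_factor pos_lower pos_coeffs_branch_poly)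
  have deg: "degree L1 = s + 4" "degree L2 = s + 5"
    unfolding L1_def L2_def s_def m0 n0
    by (simp_all add: degree_mult_pos_coeffs pos_coeffs_mult pos_coeffs_branch1_factor pos_lower
        pos_coeffs_branch_poly deg_lower degree_branch1_factor degree_branch_poly)
  have ks: "k \<le> s + 3" using k J(2) unfolding s_def by linarith
  have "3 * k + 1 \<le> 2 * (s + 3)" if "Suc k < d" "3 * d \<le> 2 * s + 11" for d
    using that by presburger
  from this[OF k[folded s_def] J(3)] have "3 * k + 1 \<le> 2 * (s + 3)" .
  hence "coeff (lin12 ^ (s + 3)) k \<le> coeff (lin12 ^ (s + 3)) (Suc k)"
    by (rule lin12_power_increasing)
  hence "coeff L1 k \<le> coeff L1 (Suc k)"
    by (rule lr_le_increasing_pos[OF lr01 pos_coeffs_power[OF pos_coeffs_lin12], rotated])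
      (use ks in \<open>simp add: degree_lin12_power\<close>)
  hence "coeff L2 k \<le> coeff L2 (Suc k)"
    by (rule lr_le_increasing_pos[OF lr12 pos(1), rotated]) (use ks in \<open>simp add: deg\<close>)
  thus ?thesis
    by (rule lr_le_increasing_pos[OF lr2A pos(2), rotated]) (use ks in \<open>simp add: deg\<close>)
qed

lemma without_root_decreasing:
  assumes "1 \<le> m" "1 \<le> n" and k: "(2 * (m + n) + 11) div 3 < k"
  shows "coeff (without_root m n) (Suc k) \<le> coeff (without_root m n) k"
proof (cases "k \<le> m + n + 5")
  case False
  hence "coeff (without_root m n) (Suc k) = 0" by (intro coeff_eq_0) (simp add: degree_without_root)
  thus ?thesis using pos_coeffs_nonneg[OF pos_coeffs_without_root] by simp
next
  case True
  define s where "s = m + n"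
  have s2: "2 \<le> s" unfolding s_def using assms(1,2) by simp
  note J = mode_index_facts[OF s2, folded s_def]
  define upper where "upper i = lin12 ^ i * lin11" for i
  have pos_upper: "pos_coeffs (upper i)" and pf2_upper: "pf2 (upper i)" for i
    unfolding upper_def by (intro pos_coeffs_mult pos_coeffs_power pos_coeffs_lin12 pos_coeffs_lin11,
        intro pf2_mult pf2_power pf2_lin12 pf2_lin11)
  have deg_upper: "degree (upper i) = Suc i" for i
    unfolding upper_def using degree_mult_pos_coeffs[OF pos_coeffs_power[OF pos_coeffs_lin12] pos_coeffs_lin11]
    by (simp add: degree_lin12_power lin11_def)
  define H1 H2 where "H1 = branch1_factor * branch_poly m * upper n" and "H2 = branch1_factor * upper m * upper n"
  have lrA1: "lr_le (without_root m n) H1"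
    using lr_le_mult_pf2[OF lr_le_branch_poly_upper[of n] pf2_mult[OF pf2_branch1_factor pf2_branch_poly[of m]]]
    unfolding H1_def without_root_def upper_def by (simp only: mult_ac)
  have lr12: "lr_le H1 H2"
    using lr_le_mult_pf2[OF lr_le_branch_poly_upper[of m] pf2_mult[OF pf2_branch1_factor pf2_upper[of n]]]
    unfolding H1_def H2_def upper_def by (simp only: mult_ac)
  have lr23: "lr_le H2 (lin12 ^ (s + 6))"
    unfolding H2_def upper_def s_def by (rule lr_le_upper_product_lin12_power)
  have pos: "pos_coeffs H1" "pos_coeffs H2"
    unfolding H1_def H2_def by (simp_all add: pos_coeffs_mult pos_coeffs_branch1_factor pos_upper pos_coeffs_branch_poly)
  have deg: "degree H1 = s + 6" "degree H2 = s + 6"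
    unfolding H1_def H2_def s_def
    by (simp_all add: degree_mult_pos_coeffs pos_coeffs_mult pos_coeffs_branch1_factor pos_upper
        pos_coeffs_branch_poly deg_upper degree_branch1_factor degree_branch_poly)
  have ks: "k \<le> s + 6" using True unfolding s_def by simp
  have "2 * (s + 6) \<le> 3 * k + 1" if "d < k" "2 * s + 9 \<le> 3 * d" for d
    using that by presburger
  from this[OF k[folded s_def] J(4)] have "2 * (s + 6) \<le> 3 * k + 1" .
  hence "coeff (lin12 ^ (s + 6)) (Suc k) \<le> coeff (lin12 ^ (s + 6)) k"
    by (rule lin12_power_decreasing)
  hence "coeff H2 (Suc k) \<le> coeff H2 k"
    by (rule lr_le_decreasing_pos[OF lr23 pos_coeffs_power[OF pos_coeffs_lin12], rotated])
      (use ks in \<open>simp add: degree_lin12_power\<close>)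
  hence "coeff H1 (Suc k) \<le> coeff H1 k"
    by (rule lr_le_decreasing_pos[OF lr12 pos(2), rotated]) (use ks in \<open>simp add: deg\<close>)
  thus ?thesis
    by (rule lr_le_decreasing_pos[OF lrA1 pos(1), rotated]) (use ks in \<open>simp add: deg\<close>)
qed

lemma coeff_with_root: "coeff (with_root m n) k = (if k = 0 then 0 else coeff ([:1,3:] * lin12 ^ (m + n + 2)) (k - 1))"
  unfolding with_root_def by (rule coeff_var_t_mult)

lemma coeff_with_root_nonneg: "0 \<le> coeff (with_root m n) k"
proof -
  have "0 \<le> coeff ([:1,3:] * lin12 ^ (m + n + 2)) (k - 1)"
    by (rule pos_coeffs_nonneg[OF pos_coeffs_linear_lin12_power]) simp_all
  thus ?thesis unfolding coeff_with_root by simp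
qed

lemma with_root_monotone:
  assumes "1 \<le> m" "1 \<le> n"
  defines "J \<equiv> (2 * (m + n) + 11) div 3"
  shows "k < J \<Longrightarrow> coeff (with_root m n) k \<le> coeff (with_root m n) (Suc k)"
    and "J \<le> k \<Longrightarrow> coeff (with_root m n) (Suc k) \<le> coeff (with_root m n) k"
proof -
  define s where "s = m + n"
  have s2: "2 \<le> s" unfolding s_def using assms(1,2) by simp
  note JF = mode_index_facts[OF s2, folded s_def, folded J_def[unfolded s_def[symmetric]]]
  define P where "P = [:1,3:] * lin12 ^ (s + 2)"
  have pos: "pos_coeffs P" unfolding P_def by (rule pos_coeffs_linear_lin12_power) simp_all
  have pf2: "pf2 P" unfolding P_def by (rule pf2_linear_lin12_power) simp_all
  have deg: "degree P = s + 3" unfolding P_def by (subst degree_linear_lin12_power) simp_all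
  have coeff_P: "coeff (with_root m n) k = (if k = 0 then 0 else coeff P (k - 1))" for k
    unfolding P_def s_def by (rule coeff_with_root)
  have inc: "coeff P (J - 2) \<le> coeff P (Suc (J - 2))"
    unfolding P_def
  proof (subst lin13_lin12_power_step(1))
    show "1 \<le> J - 2" "J - 2 \<le> s + 2" using JF(1,2) by linarith+
  qed (rule JF(5))
  have dec: "coeff P (Suc (J - 1)) \<le> coeff P (J - 1)"
    unfolding P_def
  proof (subst lin13_lin12_power_step(2))
    show "1 \<le> J - 1" "J - 1 \<le> s + 2" using JF(1,2) by linarith+
  qed (rule JF(6))
  have pos_at: "0 < coeff P (J - 2)" "0 < coeff P (J - 1)"
    using pos JF(2) deg unfolding pos_coeffs_def by simp_all
  show "coeff (with_root m n) k \<le> coeff (with_root m n) (Suc k)" if lt: "k < J"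
  proof (cases k)
    case 0 thus ?thesis using pos_coeffs_nonneg[OF pos] by (simp add: coeff_P)
  next
    case (Suc k')
    hence "coeff P k' \<le> coeff P (Suc k')" using pf2_increasing_below[OF pf2 pos_at(1) inc, of k'] lt by simp
    thus ?thesis unfolding coeff_P Suc by simp
  qed
  show "coeff (with_root m n) (Suc k) \<le> coeff (with_root m n) k" if ge: "J \<le> k"
  proof -
    obtain k' where k': "k = Suc k'" using ge JF(1) by (cases k) auto
    hence "coeff P (Suc k') \<le> coeff P k'" using pf2_decreasing_above[OF pf2 pos_at(2) dec, of k'] ge by simp
    thus ?thesis unfolding coeff_P k' by simp
  qed
qed

lemma unimodal_real_T3star:
  assumes "1 \<le> m" "1 \<le> n"
  shows "unimodal_seq (coeff (lin11 * (without_root m n + with_root m n)))"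
proof -
  define J where "J = (2 * (m + n) + 11) div 3"
  have J5: "5 \<le> J" unfolding J_def using mode_index_facts(1)[of "m + n"] assms by simp
  have "unimodal_seq (\<lambda>k. coeff (without_root m n) k + coeff (with_root m n) k)"
  proof (rule unimodal_seq_add[of J])
    show "coeff (without_root m n) (Suc J) \<le> coeff (without_root m n) J"
      if "coeff (without_root m n) J < coeff (without_root m n) (J - 1)"
    proof -
      have "0 < coeff (without_root m n) (J - 1)"
        using that pos_coeffs_nonneg[OF pos_coeffs_without_root, of m n J] by linarith
      moreover have "coeff (without_root m n) (Suc (J - 1)) \<le> coeff (without_root m n) (J - 1)"
        using that J5 by simp
      ultimately show ?thesis
        using pf2_decreasing_above[OF pf2_without_root, of m n "J - 1" J] J5 by simp
    qed
  qed (use J5 assms without_root_increasing without_root_decreasing with_root_monotone in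
        \<open>simp_all add: J_def\<close>)
  moreover have "(\<lambda>k. coeff (without_root m n) k + coeff (with_root m n) k) = coeff (without_root m n + with_root m n)"
    by (simp add: fun_eq_iff)
  moreover have "0 \<le> coeff (without_root m n + with_root m n) k" for k
    using pos_coeffs_nonneg[OF pos_coeffs_without_root] coeff_with_root_nonneg by simp
  ultimately show ?thesis unfolding lin11_def using unimodal_seq_coeff_mult_linear11 by metis
qed

lemma map_poly_of_nat_add:
  "map_poly (of_nat :: nat \<Rightarrow> 'a::comm_semiring_1) (p + q) = map_poly of_nat p + map_poly of_nat q"
  by (rule poly_eqI) (simp add: coeff_map_poly)

lemma map_poly_of_nat_mult:
  "map_poly (of_nat :: nat \<Rightarrow> 'a::comm_semiring_1) (p * q) = map_poly of_nat p * map_poly of_nat q"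
  by (rule poly_eqI) (simp add: coeff_map_poly coeff_mult)

lemma map_poly_of_nat_power:
  "map_poly (of_nat :: nat \<Rightarrow> 'a::comm_semiring_1) (p ^ k) = map_poly of_nat p ^ k"
  by (induction k) (simp_all add: map_poly_of_nat_mult)

lemma map_poly_of_nat_pCons:
  "map_poly (of_nat :: nat \<Rightarrow> 'a::comm_semiring_1) (pCons a p) = pCons (of_nat a) (map_poly of_nat p)"
  by (rule map_poly_pCons) simp

lemma real_indep_poly_T3star:
  "map_poly real (indep_poly (T3star_verts m n) (T3star_edges m n)) = lin11 * (without_root m n + with_root m n)"
proof -
  have regroup: "(a^2 * d + t * e) * U * V + t * (a^2 * d * a^m * a^n) = b * (R * U * V + t * (c * a^(m + n + 2)))"
    if "a^2 * d + t * e = b * R" "d = b * c" for a b c d e t R U V :: "real poly"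
  proof -
    have "(a^2 * d + t * e) * U * V + t * (a^2 * d * a^m * a^n) = b * R * U * V + t * (a^2 * d * a^m * a^n)"
      unfolding that(1) ..
    thus ?thesis unfolding that(2) by (simp add: algebra_simps power_add power2_eq_square)
  qed
  have branch1: "lin12 ^ 2 * [:1,4,3:] + var_t * (lin11 ^ 2 * [:1,3,1:]) = lin11 * branch1_factor"
    unfolding lin12_def lin11_def var_t_def branch1_factor_def by (simp add: power2_eq_square)
  have path4: "([:1,4,3:] :: real poly) = lin11 * [:1,3:]" unfolding lin11_def by simp
  have "map_poly real (indep_poly (T3star_verts m n) (T3star_edges m n))
      = (lin12 ^ 2 * [:1,4,3:] + var_t * (lin11 ^ 2 * [:1,3,1:])) * branch_poly m * branch_poly n
        + var_t * (lin12 ^ 2 * [:1,4,3:] * lin12 ^ m * lin12 ^ n)"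
    unfolding indep_poly_T3star branch_poly_def lin12_def lin11_def var_t_def
    by (simp only: map_poly_of_nat_add map_poly_of_nat_mult map_poly_of_nat_power map_poly_of_nat_pCons
        map_poly_0) simp
  also have "\<dots> = lin11 * (without_root m n + with_root m n)"
    unfolding without_root_def with_root_def by (rule regroup[OF branch1 path4])
  finally show ?thesis .
qed

lemma unimodal_if_unimodal_seq:
  assumes "unimodal_seq (\<lambda>k. real (coeff p k))"
  shows "unimodal p"
  using assms unfolding unimodal_seq_def unimodal_def by auto

theorem mainTheorem2:
  fixes m n :: nat
  assumes "m \<ge> 1" and "n \<ge> 1"
  shows "unimodal (indep_poly (T3star_verts m n) (T3star_edges m n))"
proof (rule unimodal_if_unimodal_seq)
  have "unimodal_seq (coeff (map_poly real (indep_poly (T3star_verts m n) (T3star_edges m n))))"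
    unfolding real_indep_poly_T3star using assms by (rule unimodal_real_T3star)
  moreover have "coeff (map_poly real (indep_poly (T3star_verts m n) (T3star_edges m n)))
      = (\<lambda>k. real (coeff (indep_poly (T3star_verts m n) (T3star_edges m n)) k))"
    by (simp add: fun_eq_iff coeff_map_poly)
  ultimately show "unimodal_seq (\<lambda>k. real (coeff (indep_poly (T3star_verts m n) (T3star_edges m n)) k))"
    by simp
qed

end
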